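(* Assume $m=n$. Then $\mathcal{D}_q=\operatorname{End}_{\mathcal{C}_q}V^{\otimes r}$ is isomorphic as a $K$-algebra to the $\mathbb{Z}_2$-crossed product $(\mathcal{B}_q)^{\psi_1}_{\alpha_1}[\mathbb{Z}_2]$, via $a_1u_1+a_2u_{-1}\mapsto a_1+a_2\varphi^{\otimes r}$ ($a_1,a_2\in\mathcal{B}_q$). In particular $\dim_K\mathcal{D}_q=2\dim_K\mathcal{B}_q$.
   Context: $q$ indeterminate, $K=\mathbb{Q}(q)$, $r\ge2$. $\mathcal{H}_{K,r}(q)$ is the type $A$ Iwahori–Hecke algebra (generators $T_1,\dots,T_{r-1}$, $T_i^2=(q-q^{-1})T_i+1$, braid relations); $T'_i=\frac{2T_i-(q-q^{-1})}{q+q^{-1}}$; the Goldman involution is the algebra automorphism with $\hat T_i=(q-q^{-1})-T_i$ and $\mathcal{H}^1_{K,r}(q)=\{X:\hat X=X\}$. $V$ is $\mathbb{Z}_2$-graded with basis $v_1,\dots,v_{2m}$, $|v_k|=0$ for $k\le m$, $1$ for $k>m$. The $q$-permutation representation $\pi_r$ of $\mathcal{H}_{K,r}(q)$ on $V^{\otimes r}$ is given by $\pi_r(T'_i)=\mathrm{Id}^{\otimes i-1}\otimes T'\otimes\mathrm{Id}^{\otimes r-i-1}$ with $T'(v_k\otimes v_k)=(-1)^{|v_k|}v_k\otimes v_k$ and for $k\ne l$, $T'(v_k\otimes v_l)=\frac{2(-1)^{|v_k||v_l|}}{q+q^{-1}}v_l\otimes v_k\pm\frac{q-q^{-1}}{q+q^{-1}}v_k\otimes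 v_l$ ($+$ if $k<l$, $-$ if $k>l$). $\mathcal{A}_q=\pi_r(\mathcal{H}_{K,r}(q))$, $\mathcal{C}_q=\pi_r(\mathcal{H}^1_{K,r}(q))$, $\mathcal{B}_q=\operatorname{End}_{\mathcal{A}_q}V^{\otimes r}$, $\mathcal{D}_q=\operatorname{End}_{\mathcal{C}_q}V^{\otimes r}$. $\varphi(v_i)=v_{2m-i+1}$, $\varphi^{\otimes r}(u_1\otimes\cdots\otimes u_r)=(-1)^{\sum_{i=2}^r\sum_{j<i}|u_j|}\varphi(u_1)\otimes\cdots\otimes\varphi(u_r)$; $\omega(f)=(-1)^{r(r-1)/2}\varphi^{\otimes r}f\varphi^{\otimes r}$ is an algebra automorphism of $\mathcal{B}_q$. $\psi_1(1)=\mathrm{id}$, $\psi_1(-1)=\omega$; $\alpha_1(\sigma,\tau)=1$ if $\sigma=1$ or $\tau=1$, $\alpha_1(-1,-1)=(-1)^{r(r-1)/2}$. For a crossed system $(A,G,\psi,\alpha)$ (${}^\sigma a:=\psi(\sigma)(a)$), the crossed product $A^\psi_\alpha[G]$ is the free left $A$-module with basis $\{u_\sigma\}_{\sigma\in G}$ and multiplication $(a_1u_\sigma)(a_2u_\tau)=a_1\,{}^\sigma a_2\,\alpha(\sigma,\tau)u_{\sigma\tau}$. *)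

theory Defs
  imports Complex_Main
    "HOL-Computational_Algebra.Polynomial"
    "HOL-Computational_Algebra.Fraction_Field"
    "HOL-Combinatorics.Permutations"
    "HOL-Combinatorics.Transposition"
    "HOL-Library.Function_Algebras"
begin

section \<open>The ground field K = Q(q)\<close>

type_synonym K = "rat poly fract"

definition qq :: K where "qq = Fract [:0, 1:] 1"

definition cc :: K where "cc = qq - inverse qq"

(* f x y = coefficient of basis vector x in f(basis vector y) *)
type_synonym 'i lmap = "'i \<Rightarrow> 'i \<Rightarrow> K"

definition lin :: "'i set \<Rightarrow> 'i lmap set" where
  "lin I = {f. \<forall>x y. x \<notin> I \<or> y \<notin> I \<longrightarrow> f x y = 0}"

definition mmul :: "'i set \<Rightarrow> 'i lmap \<Rightarrow> 'i lmap \<Rightarrow> 'i lmap" where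
  "mmul I f g = (\<lambda>x y. \<Sum>z\<in>I. f x z * g z y)"

definition mid :: "'i set \<Rightarrow> 'i lmap" where
  "mid I = (\<lambda>x y. if x \<in> I \<and> x = y then 1 else 0)"

definition msc :: "K \<Rightarrow> 'i lmap \<Rightarrow> 'i lmap" where
  "msc c f = (\<lambda>x y. c * f x y)"

definition centralizer :: "'i set \<Rightarrow> 'i lmap set \<Rightarrow> 'i lmap set" where
  "centralizer I S = {f \<in> lin I. \<forall>a\<in>S. mmul I f a = mmul I a f}"

section \<open>Noncommutative polynomial expressions in the generators T_1..T_{r-1}\<close>

datatype ncpoly = Gen nat | Scal K | Plus ncpoly ncpoly | Times ncpoly ncpoly

fun ncwf :: "nat \<Rightarrow> ncpoly \<Rightarrow> bool" where
  "ncwf r (Gen i) = (1 \<le> i \<and> i < r)"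
| "ncwf r (Scal c) = True"
| "ncwf r (Plus a b) = (ncwf r a \<and> ncwf r b)"
| "ncwf r (Times a b) = (ncwf r a \<and> ncwf r b)"

fun nceval :: "'i set \<Rightarrow> (nat \<Rightarrow> 'i lmap) \<Rightarrow> ncpoly \<Rightarrow> 'i lmap" where
  "nceval I g (Gen i) = g i"
| "nceval I g (Scal c) = msc c (mid I)"
| "nceval I g (Plus a b) = nceval I g a + nceval I g b"
| "nceval I g (Times a b) = mmul I (nceval I g a) (nceval I g b)"

fun goldman :: "ncpoly \<Rightarrow> ncpoly" where
  "goldman (Gen i) = Plus (Scal cc) (Times (Scal (-1)) (Gen i))"
| "goldman (Scal c) = Scal c"
| "goldman (Plus a b) = Plus (goldman a) (goldman b)"
| "goldman (Times a b) = Times (goldman a) (goldman b)"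

section \<open>The Hecke algebra via its (faithful) left regular representation\<close>

definition Wr :: "nat \<Rightarrow> (nat \<Rightarrow> nat) set" where
  "Wr r = {w. w permutes {0..<r}}"

definition plen :: "nat \<Rightarrow> (nat \<Rightarrow> nat) \<Rightarrow> nat" where
  "plen r w = card {(i, j). i < j \<and> j < r \<and> w j < w i}"

(* s_i, 1 <= i <= r-1, swaps positions i-1 and i (0-indexed) *)
definition sgen :: "nat \<Rightarrow> nat \<Rightarrow> nat" where
  "sgen i = Transposition.transpose (i - 1) i"

(* left multiplication by T_i on the standard basis T_w of H_{K,r}(q) *)
definition regL :: "nat \<Rightarrow> nat \<Rightarrow> (nat \<Rightarrow> nat) lmap" where
  "regL r i = (\<lambda>x y. if x \<in> Wr r \<and> y \<in> Wr r then
       (if x = sgen i \<circ> y then 1 else 0)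
       + (if plen r (sgen i \<circ> y) < plen r y \<and> x = y then cc else 0)
     else 0)"

section \<open>The q-permutation representation on V^{\<otimes> r}, dim V = 2m\<close>

definition tidx :: "nat \<Rightarrow> nat \<Rightarrow> nat list set" where
  "tidx m r = {xs. length xs = r \<and> set xs \<subseteq> {1..2*m}}"

(* parity of v_k *)
definition odd_v :: "nat \<Rightarrow> nat \<Rightarrow> bool" where
  "odd_v m k = (m < k)"

definition psgn :: "bool \<Rightarrow> K" where
  "psgn b = (if b then -1 else 1)"

(* matrix of T' on V \<otimes> V: coefficient of v_k' \<otimes> v_l' in T'(v_k \<otimes> v_l) *)
definition tprime :: "nat \<Rightarrow> nat \<times> nat \<Rightarrow> nat \<times> nat \<Rightarrow> K" where
  "tprime m kl' kl = (let (k, l) = kl in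
     if k = l then (if kl' = (k, l) then psgn (odd_v m k) else 0)
     else (if kl' = (l, k) then 2 * psgn (odd_v m k \<and> odd_v m l) / (qq + inverse qq) else 0)
        + (if kl' = (k, l) then (if k < l then 1 else -1) * cc / (qq + inverse qq) else 0))"

(* pi_r(T'_i), acting on tensor positions i, i+1 (1-indexed) *)
definition piTp :: "nat \<Rightarrow> nat \<Rightarrow> nat \<Rightarrow> nat list lmap" where
  "piTp m r i = (\<lambda>x y. if x \<in> tidx m r \<and> y \<in> tidx m r \<and>
        (\<forall>j<r. j \<noteq> i - 1 \<and> j \<noteq> i \<longrightarrow> x ! j = y ! j)
     then tprime m (x ! (i - 1), x ! i) (y ! (i - 1), y ! i) else 0)"

definition piT :: "nat \<Rightarrow> nat \<Rightarrow> nat \<Rightarrow> nat list lmap" where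
  "piT m r i = (\<lambda>x y. ((qq + inverse qq) * piTp m r i x y + cc * mid (tidx m r) x y) / 2)"

definition Aq :: "nat \<Rightarrow> nat \<Rightarrow> nat list lmap set" where
  "Aq m r = {nceval (tidx m r) (piT m r) p | p. ncwf r p}"

definition Cq :: "nat \<Rightarrow> nat \<Rightarrow> nat list lmap set" where
  "Cq m r = {nceval (tidx m r) (piT m r) p | p. ncwf r p \<and>
     nceval (Wr r) (regL r) (goldman p) = nceval (Wr r) (regL r) p}"

definition Bq :: "nat \<Rightarrow> nat \<Rightarrow> nat list lmap set" where
  "Bq m r = centralizer (tidx m r) (Aq m r)"

definition Dq :: "nat \<Rightarrow> nat \<Rightarrow> nat list lmap set" where
  "Dq m r = centralizer (tidx m r) (Cq m r)"

definition phiv :: "nat \<Rightarrow> nat \<Rightarrow> nat" where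
  "phiv m k = 2 * m - k + 1"

definition phiT :: "nat \<Rightarrow> nat \<Rightarrow> nat list lmap" where
  "phiT m r = (\<lambda>x y. if y \<in> tidx m r \<and> x = map (phiv m) y then
      (-1) ^ (\<Sum>i\<in>{1..<r}. \<Sum>j<i. if odd_v m (y ! j) then 1 else 0) else 0)"

definition omega :: "nat \<Rightarrow> nat \<Rightarrow> nat list lmap \<Rightarrow> nat list lmap" where
  "omega m r f = msc ((-1) ^ (r * (r - 1) div 2))
     (mmul (tidx m r) (mmul (tidx m r) (phiT m r) f) (phiT m r))"

section \<open>Crossed products A^psi_alpha[G] (elements: G -> A, sigma |-> coefficient of u_sigma)\<close>

definition cp_carrier :: "'g set \<Rightarrow> 'i lmap set \<Rightarrow> ('g \<Rightarrow> 'i lmap) set" where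
  "cp_carrier G A = {x. (\<forall>s\<in>G. x s \<in> A) \<and> (\<forall>s. s \<notin> G \<longrightarrow> x s = 0)}"

definition cp_mul :: "'g set \<Rightarrow> ('g \<Rightarrow> 'g \<Rightarrow> 'g) \<Rightarrow> 'i set \<Rightarrow> ('g \<Rightarrow> 'i lmap \<Rightarrow> 'i lmap)
    \<Rightarrow> ('g \<Rightarrow> 'g \<Rightarrow> 'i lmap) \<Rightarrow> ('g \<Rightarrow> 'i lmap) \<Rightarrow> ('g \<Rightarrow> 'i lmap) \<Rightarrow> ('g \<Rightarrow> 'i lmap)" where
  "cp_mul G gmul I psi alpha x y = (\<lambda>\<rho>.
     \<Sum>s\<in>G. \<Sum>t\<in>G. if gmul s t = \<rho>
        then mmul I (mmul I (x s) (psi s (y t))) (alpha s t) else 0)"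

definition Z2 :: "int set" where "Z2 = {1, -1}"

definition psi1 :: "nat \<Rightarrow> nat \<Rightarrow> int \<Rightarrow> nat list lmap \<Rightarrow> nat list lmap" where
  "psi1 m r s = (if s = 1 then id else omega m r)"

definition alpha1 :: "nat \<Rightarrow> nat \<Rightarrow> int \<Rightarrow> int \<Rightarrow> nat list lmap" where
  "alpha1 m r s t = (if s = -1 \<and> t = -1
      then msc ((-1) ^ (r * (r - 1) div 2)) (mid (tidx m r)) else mid (tidx m r))"

definition Phi :: "nat \<Rightarrow> nat \<Rightarrow> (int \<Rightarrow> nat list lmap) \<Rightarrow> nat list lmap" where
  "Phi m r x = x 1 + mmul (tidx m r) (x (-1)) (phiT m r)"

end

(* Let theta = pi_r(T'_1) and phi = phi^(tensor r). The operators pi_r(T'_i) are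
   involutions, phi^2 = (-1)^(r(r-1)/2), and phi pi_r(T_i) = pi_r((q - q^-1) - T_i) phi, so phi
   realizes the Goldman involution and commutes with C_q. The products pi_r(T'_i) theta and the
   conjugates theta X theta (X in C_q) lie in C_q, and pi_r(T'_i) = (pi_r(T'_i) theta) theta.
   Hence an element of D_q commuting with theta lies in B_q, and one anticommuting with theta lands
   in B_q after right multiplication by phi, because phi theta = - theta phi. Splitting d in D_q as
   1/2 (d + theta d theta) + 1/2 (d - theta d theta) gives D_q = B_q + B_q phi; the sum is direct
   since theta commutes with B_q and anticommutes with B_q phi. As omega is conjugation by phi up to
   the sign phi^2, the crossed product multiplication is carried to the product in D_q.
   Since H^1 is defined inside the Hecke algebra itself (modelled by its regular representation),
   one also needs that every representation satisfying the Hecke relations factors through the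
   regular one, which rests on Matsumoto's theorem for reduced words. *)

theory Submission
  imports Defs
begin

lemma qq_nonzero: "qq \<noteq> 0"
  unfolding qq_def by (simp add: Zero_fract_def eq_fract)

lemma qq_plus_inverse_nonzero: "qq + inverse qq \<noteq> 0"
proof
  assume "qq + inverse qq = 0"
  then have "qq * (qq + inverse qq) = 0"
    by simp
  then have "qq * qq + 1 = 0"
    using qq_nonzero by (simp add: distrib_left)
  moreover have "qq * qq + 1 = Fract ([:0, 1:] * [:0, 1:] + 1) 1"
    unfolding qq_def by (simp add: One_fract_def)
  moreover have "coeff ([:0, 1:] * [:0, 1:] + 1 :: rat poly) 2 = 1"
    by (simp add: numeral_2_eq_2)
  ultimately show False
    by (auto simp: Zero_fract_def eq_fract)
qed

lemma linD1: "f \<in> lin I \<Longrightarrow> x \<notin> I \<Longrightarrow> f x y = 0"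
  and linD2: "f \<in> lin I \<Longrightarrow> y \<notin> I \<Longrightarrow> f x y = 0"
  by (simp_all add: lin_def)

lemma lin_zero [simp]: "0 \<in> lin I"
  and lin_add [simp]: "f \<in> lin I \<Longrightarrow> g \<in> lin I \<Longrightarrow> f + g \<in> lin I"
  and lin_diff [simp]: "f \<in> lin I \<Longrightarrow> g \<in> lin I \<Longrightarrow> f - g \<in> lin I"
  and lin_msc [simp]: "f \<in> lin I \<Longrightarrow> msc c f \<in> lin I"
  and lin_mid [simp]: "mid I \<in> lin I"
  by (simp_all add: lin_def msc_def mid_def)

lemma lin_mmul [simp]: "f \<in> lin I \<Longrightarrow> g \<in> lin I \<Longrightarrow> mmul I f g \<in> lin I"
  unfolding lin_def mmul_def by auto

lemma sum_lmap_apply: "(\<Sum>y\<in>S. X y) a b = (\<Sum>y\<in>S. (X y a b :: K))"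
  by (induction S rule: infinite_finite_induct) auto

lemma lin_sum: "(\<And>y. y \<in> S \<Longrightarrow> X y \<in> lin I) \<Longrightarrow> (\<Sum>y\<in>S. X y) \<in> lin I"
  by (auto simp: lin_def sum_lmap_apply intro!: sum.neutral)

lemma mmul_assoc: "finite I \<Longrightarrow> mmul I (mmul I f g) h = mmul I f (mmul I g h)"
  unfolding mmul_def
  by (auto simp: sum_distrib_left sum_distrib_right mult.assoc intro!: ext sum.swap)

lemma mmul_mid_left [simp]:
  assumes "finite I" "g \<in> lin I" shows "mmul I (mid I) g = g"
proof (intro ext)
  fix x y show "mmul I (mid I) g x y = g x y"
    using assms unfolding mmul_def mid_def
    by (cases "x \<in> I") (simp_all add: linD1 if_distrib[where f="\<lambda>u. u * _"] cong: if_cong)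
qed

lemma mmul_mid_right [simp]:
  assumes "finite I" "g \<in> lin I" shows "mmul I g (mid I) = g"
proof (intro ext)
  fix x y show "mmul I g (mid I) x y = g x y"
    using assms unfolding mmul_def mid_def
    by (cases "y \<in> I") (simp_all add: linD2 if_distrib[where f="\<lambda>u. _ * u"] cong: if_cong)
qed

lemma mmul_add_left: "mmul I (f + g) h = mmul I f h + mmul I g h"
  unfolding mmul_def by (auto intro!: ext simp: distrib_right sum.distrib)

lemma mmul_add_right: "mmul I h (f + g) = mmul I h f + mmul I h g"
  unfolding mmul_def by (auto intro!: ext simp: distrib_left sum.distrib)

lemma mmul_diff_left: "mmul I (f - g) h = mmul I f h - mmul I g h"
  unfolding mmul_def by (auto intro!: ext simp: left_diff_distrib sum_subtractf)

lemma mmul_diff_right: "mmul I h (f - g) = mmul I h f - mmul I h g"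
  unfolding mmul_def by (auto intro!: ext simp: right_diff_distrib sum_subtractf)

lemma mmul_uminus_left: "mmul I (- f) h = - mmul I f h"
  unfolding mmul_def by (auto intro!: ext simp: sum_negf)

lemma mmul_uminus_right: "mmul I h (- f) = - mmul I h f"
  unfolding mmul_def by (auto intro!: ext simp: sum_negf)

lemma mmul_msc_left: "mmul I (msc c f) h = msc c (mmul I f h)"
  unfolding mmul_def msc_def by (auto intro!: ext simp: sum_distrib_left mult.assoc)

lemma mmul_msc_right: "mmul I h (msc c f) = msc c (mmul I h f)"
  unfolding mmul_def msc_def by (auto intro!: ext simp: sum_distrib_left mult.left_commute)

lemmas mmul_linear_simps = mmul_add_left mmul_add_right mmul_diff_left mmul_diff_right
  mmul_uminus_left mmul_uminus_right mmul_msc_left mmul_msc_right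

lemma mmul_zero_left [simp]: "mmul I 0 h = 0"
  and mmul_zero_right [simp]: "mmul I h 0 = 0"
  by (auto simp: mmul_def fun_eq_iff)

lemma mmul_sum_right: "mmul I A (\<Sum>y\<in>S. X y) = (\<Sum>y\<in>S. mmul I A (X y))"
  unfolding mmul_def by (simp add: fun_eq_iff sum_lmap_apply sum_distrib_left sum.swap[where A=I])

lemma msc_add: "msc c (f + g) = msc c f + msc c g"
  and msc_add_scalar: "msc (a + b) f = msc a f + msc b f"
  and msc_msc [simp]: "msc a (msc b f) = msc (a * b) f"
  and msc_one [simp]: "msc 1 f = f"
  and msc_zero [simp]: "msc 0 f = 0"
  and msc_zero_right [simp]: "msc c 0 = 0"
  and msc_minus_one: "msc (-1) f = - f"
  by (simp_all add: msc_def fun_eq_iff distrib_left distrib_right)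

lemma msc_sum_left: "msc (\<Sum>y\<in>S. a y) f = (\<Sum>y\<in>S. msc (a y) f)"
  and msc_sum_right: "msc c (\<Sum>y\<in>S. X y) = (\<Sum>y\<in>S. msc c (X y))"
  by (simp_all add: fun_eq_iff msc_def sum_lmap_apply sum_distrib_left sum_distrib_right)

definition mvec :: "'i set \<Rightarrow> 'i lmap \<Rightarrow> ('i \<Rightarrow> K) \<Rightarrow> 'i \<Rightarrow> K" where
  "mvec I A g = (\<lambda>x. \<Sum>y\<in>I. A x y * g y)"

lemma mvec_add: "mvec I (A + B) g = (\<lambda>x. mvec I A g x + mvec I B g x)"
  by (simp add: mvec_def distrib_right sum.distrib)

lemma mvec_msc_mid:
  "finite I \<Longrightarrow> mvec I (msc c (mid I)) g = (\<lambda>x. if x \<in> I then c * g x else 0)"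
  by (auto simp: mvec_def msc_def mid_def fun_eq_iff if_distrib[where f="\<lambda>u. _ * u * _"]
      cong: if_cong)

lemma mvec_mmul: "mvec I (mmul I A B) g = mvec I A (mvec I B g)"
proof
  fix x
  have "(\<Sum>y\<in>I. (\<Sum>z\<in>I. A x z * B z y) * g y) = (\<Sum>y\<in>I. \<Sum>z\<in>I. A x z * B z y * g y)"
    by (simp add: sum_distrib_right)
  also have "\<dots> = (\<Sum>z\<in>I. \<Sum>y\<in>I. A x z * B z y * g y)"
    by (rule sum.swap)
  also have "\<dots> = (\<Sum>z\<in>I. A x z * (\<Sum>y\<in>I. B z y * g y))"
    by (simp add: sum_distrib_left mult.assoc)
  finally show "mvec I (mmul I A B) g x = mvec I A (mvec I B g) x"
    unfolding mvec_def mmul_def .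
qed

lemma vector_space_msc: "vector_space (msc :: K \<Rightarrow> 'i lmap \<Rightarrow> 'i lmap)"
  by unfold_locales (simp_all add: msc_add msc_add_scalar)

lemma (in vector_space) independent_Un:
  assumes S: "independent S" and T: "independent T"
    and disj: "\<And>a b. a \<in> span S \<Longrightarrow> b \<in> span T \<Longrightarrow> a + b = 0 \<Longrightarrow> a = 0"
  shows "independent (S \<union> T)"
  unfolding independent_explicit_module
proof (intro allI impI)
  fix t u v
  assume t: "finite t" "t \<subseteq> S \<union> T" and sum0: "(\<Sum>v\<in>t. scale (u v) v) = 0" and v: "v \<in> t"
  define a b where "a = (\<Sum>v\<in>t \<inter> S. scale (u v) v)" and "b = (\<Sum>v\<in>t - S. scale (u v) v)"
  have ab: "a \<in> span S" "b \<in> span T"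
    using t unfolding a_def b_def by (auto intro!: span_sum span_scale intro: span_base)
  have "a + b = 0"
    using sum0 unfolding a_def b_def sum.Int_Diff[OF t(1), symmetric] .
  then have "a = 0" "b = 0"
    using disj[OF ab] by auto
  then show "u v = 0"
    using independentD[OF S, of "t \<inter> S" u v] independentD[OF T, of "t - S" u v] t v
    by (cases "v \<in> S") (auto simp: a_def b_def)
qed

lemma (in vector_space) dim_sums_linear_image:
  assumes B: "subspace B" and F: "Vector_Spaces.linear scale scale F"
    and trivial: "\<And>a b. a \<in> B \<Longrightarrow> b \<in> B \<Longrightarrow> a + F b = 0 \<Longrightarrow> a = 0 \<and> b = 0"
  shows "dim {a + F b | a b. a \<in> B \<and> b \<in> B} = 2 * dim B"
proof -
  interpret F: Vector_Spaces.linear scale scale F by (rule F)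
  obtain bs where bs: "bs \<subseteq> B" "independent bs" "B \<subseteq> span bs" "card bs = dim B"
    using basis_exists by blast
  have span_bs: "span bs = B"
    using bs span_minimal[OF bs(1) B] by auto
  have inj: "inj_on F B"
  proof (rule inj_onI)
    fix x y assume "x \<in> B" "y \<in> B" "F x = F y"
    then show "x = y"
      using trivial[of 0 "x - y"] B by (simp add: F.diff subspace_0 subspace_diff)
  qed
  have indep: "independent (bs \<union> F ` bs)"
  proof (rule independent_Un[OF bs(2)])
    show "independent (F ` bs)"
      using F.independent_injective_image[OF bs(2)] inj span_bs by simp
    show "a = 0" if "a \<in> span bs" "b \<in> span (F ` bs)" "a + b = 0" for a b
      using that trivial span_bs by (auto simp: F.span_image)
  qed
  have disj: "bs \<inter> F ` bs = {}"
  proof (intro equals0I)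
    fix v assume "v \<in> bs \<inter> F ` bs"
    then obtain w where v: "v \<in> bs" and w: "w \<in> bs" and "v = F w" by blast
    then have "v + F (- w) = 0" by (simp add: F.neg)
    moreover have "v \<in> B" "- w \<in> B" using v w bs(1) B subspace_neg by auto
    ultimately have "v = 0" using trivial by blast
    then show False using v bs(2) dependent_zero by blast
  qed
  have "card (bs \<union> F ` bs) = 2 * card bs"
    using card_Un_disjoint[OF _ _ disj] card_image[OF inj_on_subset[OF inj bs(1)]]
    by (cases "finite bs") auto
  moreover have "{a + F b | a b. a \<in> B \<and> b \<in> B} = span (bs \<union> F ` bs)"
    unfolding span_Un F.span_image span_bs by blast
  ultimately show ?thesis
    using dim_span_eq_card_independent[OF indep] bs(4) by simp
qed


lemma nceval_intertwine:
  assumes I: "finite I" and X: "X \<in> lin I"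
    and gen: "\<And>i. 1 \<le> i \<Longrightarrow> i < r \<Longrightarrow> mmul I X (g i) = mmul I (h i) X"
  shows "ncwf r p \<Longrightarrow> mmul I X (nceval I g p) = mmul I (nceval I h p) X"
proof (induction p)
  case (Scal c)
  then show ?case using I X by (simp add: mmul_msc_left mmul_msc_right)
next
  case (Plus a b)
  then show ?case unfolding nceval.simps mmul_add_left mmul_add_right by simp
next
  case (Times a b)
  then show ?case by (simp add: mmul_assoc[OF I, symmetric]) (simp add: mmul_assoc[OF I])
qed (use gen in simp)

lemma nceval_goldman:
  assumes I: "finite I" and g: "\<And>i. 1 \<le> i \<Longrightarrow> i < r \<Longrightarrow> g i \<in> lin I"
  shows "ncwf r p \<Longrightarrow> nceval I g (goldman p) = nceval I (\<lambda>i. msc cc (mid I) - g i) p"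
proof (induction p)
  case (Gen i)
  then show ?case using I g by (simp add: mmul_uminus_left msc_minus_one)
qed simp_all

lemma ncwf_goldman: "ncwf r p \<Longrightarrow> ncwf r (goldman p)"
  by (induction p) auto

section \<open>Reduced words in the symmetric group\<close>

definition left_descent :: "(nat \<Rightarrow> nat) \<Rightarrow> nat \<Rightarrow> bool" where
  "left_descent w i \<longleftrightarrow> inv w i < inv w (i - 1)"

definition inversions :: "nat \<Rightarrow> (nat \<Rightarrow> nat) \<Rightarrow> (nat \<times> nat) set" where
  "inversions r w = {(i, j). i < j \<and> j < r \<and> w j < w i}"

lemma plen_eq_card_inversions: "plen r w = card (inversions r w)"
  by (simp add: plen_def inversions_def)

lemma plen_id [simp]: "plen r id = 0"
proof -
  have e: "{(i, j). i < j \<and> j < r \<and> (j::nat) < i} = {}" by auto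
  show ?thesis unfolding plen_def id_def e by simp
qed

lemma finite_inversions: "finite (inversions r w)"
  by (rule finite_subset[of _ "{0..<r} \<times> {0..<r}"]) (auto simp: inversions_def)

lemma Wr_permutes: "w \<in> Wr r \<Longrightarrow> w permutes {0..<r}"
  by (simp add: Wr_def)

lemma Wr_inv_apply [simp]: "w \<in> Wr r \<Longrightarrow> w (inv w x) = x"
  and Wr_apply_inv [simp]: "w \<in> Wr r \<Longrightarrow> inv w (w x) = x"
  using permutes_inverses[OF Wr_permutes] by auto

lemma Wr_apply_lt: "w \<in> Wr r \<Longrightarrow> x < r \<Longrightarrow> w x < r"
  using permutes_in_image[OF Wr_permutes, of w r x] by auto

lemma Wr_inv_lt: "w \<in> Wr r \<Longrightarrow> x < r \<Longrightarrow> inv w x < r"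
  using permutes_in_image[OF permutes_inv[OF Wr_permutes], of w r x] by auto

lemma Wr_inj_eq [simp]: "w \<in> Wr r \<Longrightarrow> w x = w y \<longleftrightarrow> x = y"
  using permutes_inj[OF Wr_permutes] by (auto dest: injD)

lemma id_Wr [simp]: "id \<in> Wr r"
  by (simp add: Wr_def permutes_id)

lemma finite_Wr: "finite (Wr r)"
  using finite_permutations[of "{0..<r}"] by (simp add: Wr_def)

lemma sgen_Wr: "1 \<le> i \<Longrightarrow> i < r \<Longrightarrow> sgen i \<in> Wr r"
  unfolding Wr_def sgen_def by (auto intro!: permutes_swap_id)

lemma sgen_comp_Wr: "1 \<le> i \<Longrightarrow> i < r \<Longrightarrow> w \<in> Wr r \<Longrightarrow> sgen i \<circ> w \<in> Wr r"
  using sgen_Wr unfolding Wr_def by (auto intro: permutes_compose)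

lemma sgen_apply: "sgen i x = (if x = i - 1 then i else if x = i then i - 1 else x)"
  by (simp add: sgen_def transpose_def)

lemma sgen_sgen [simp]: "sgen i (sgen i x) = x"
  and sgen_comp_sgen [simp]: "sgen i \<circ> (sgen i \<circ> w) = w"
  by (auto simp: sgen_def fun_eq_iff)

lemma inv_sgen_comp: "w \<in> Wr r \<Longrightarrow> inv (sgen i \<circ> w) = inv w \<circ> sgen i"
  unfolding sgen_def Wr_def by (simp add: o_inv_distrib permutes_bij bij_transpose)

lemma left_descent_sgen_comp: "w \<in> Wr r \<Longrightarrow>
    left_descent (sgen i \<circ> w) j \<longleftrightarrow> inv w (sgen i j) < inv w (sgen i (j - 1))"
  unfolding left_descent_def inv_sgen_comp by simp

lemma left_descent_sgen_comp_self:
  assumes w: "w \<in> Wr r" and i: "1 \<le> i" "i < r"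
  shows "left_descent (sgen i \<circ> w) i \<longleftrightarrow> \<not> left_descent w i"
proof -
  have "inv w i \<noteq> inv w (i - 1)"
    using i by (metis Wr_inv_apply[OF w] diff_less less_one nat_neq_iff order_less_le_trans)
  then show ?thesis
    using i unfolding left_descent_sgen_comp[OF w] by (auto simp: left_descent_def sgen_apply)
qed

lemma plen_left_descent:
  assumes w: "w \<in> Wr r" and i: "1 \<le> i" "i < r" and d: "left_descent w i"
  shows "plen r w = Suc (plen r (sgen i \<circ> w))"
proof -
  define a b where "a = inv w (i - 1)" and "b = inv w i"
  have ab: "w a = i - 1" "w b = i" "a < r" "b < r" "b < a"
    using w i d by (simp_all add: a_def b_def Wr_inv_lt left_descent_def)
  have "inversions r w = insert (b, a) (inversions r (sgen i \<circ> w))"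
  proof (rule set_eqI)
    fix p :: "nat \<times> nat"
    obtain x y where p: "p = (x, y)" by (cases p)
    show "p \<in> inversions r w \<longleftrightarrow> p \<in> insert (b, a) (inversions r (sgen i \<circ> w))"
    proof (cases "p = (b, a) \<or> \<not> (x < y \<and> y < r)")
      case True
      then show ?thesis using p ab i by (auto simp: inversions_def)
    next
      case False
      have "\<not> (w x \<in> {i - 1, i} \<and> w y \<in> {i - 1, i})"
      proof
        assume "w x \<in> {i - 1, i} \<and> w y \<in> {i - 1, i}"
        then have "x \<in> {a, b} \<and> y \<in> {a, b}"
          using ab w by (metis Wr_inj_eq insert_iff singletonD)
        then show False using False p ab by auto
      qed
      moreover have "w x \<noteq> w y" using False w by simp
      ultimately have "sgen i (w y) < sgen i (w x) \<longleftrightarrow> w y < w x"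
        by (auto simp: sgen_apply)
      then show ?thesis using False p by (auto simp: inversions_def)
    qed
  qed
  moreover have "(b, a) \<notin> inversions r (sgen i \<circ> w)"
    using ab i by (auto simp: inversions_def sgen_apply)
  ultimately show ?thesis
    by (simp add: plen_eq_card_inversions finite_inversions)
qed

lemma plen_not_left_descent:
  assumes w: "w \<in> Wr r" and i: "1 \<le> i" "i < r" and d: "\<not> left_descent w i"
  shows "plen r (sgen i \<circ> w) = Suc (plen r w)"
  using plen_left_descent[OF sgen_comp_Wr[OF i w] i] left_descent_sgen_comp_self[OF w i] d by simp

lemma plen_eq_0_imp_id:
  assumes w: "w \<in> Wr r" and p: "plen r w = 0"
  shows "w = id"
proof -
  have no_inv: "inversions r w = {}"
    using p finite_inversions by (simp add: plen_eq_card_inversions)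
  have mono: "w x < w y" if "x < y" "y < r" for x y
  proof -
    have "w x \<noteq> w y" using that w by simp
    moreover have "\<not> w y < w x" using no_inv that by (auto simp: inversions_def)
    ultimately show ?thesis by simp
  qed
  have "i < r \<longrightarrow> i \<le> w i" for i
  proof (induction i)
    case (Suc i)
    then show ?case using mono[of i "Suc i"] by auto
  qed simp
  then show ?thesis
    by (intro permutes_natset_ge[OF Wr_permutes[OF w]]) auto
qed

lemma ex_left_descent:
  assumes w: "w \<in> Wr r" and p: "plen r w \<noteq> 0"
  shows "\<exists>i. 1 \<le> i \<and> i < r \<and> left_descent w i"
proof (rule ccontr)
  assume "\<not> ?thesis"
  then have step: "inv w (i - 1) < inv w i" if "1 \<le> i" "i < r" for i
    using that w by (auto simp: left_descent_def)
      (metis One_nat_def Wr_inv_apply diff_less less_numeral_extra(1) nat_neq_iff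
        order_less_le_trans)
  have mono: "x < y \<longrightarrow> y < r \<longrightarrow> inv w x < inv w y" for x y
  proof (induction y)
    case (Suc y)
    then show ?case using step[of "Suc y"] by (auto simp: less_Suc_eq)
  qed simp
  have "inversions r w \<noteq> {}"
    using p by (auto simp: plen_eq_card_inversions)
  then obtain x y where xy: "x < y" "y < r" "w y < w x"
    by (auto simp: inversions_def)
  have "w x < r" using xy w by (simp add: Wr_apply_lt)
  then have "inv w (w y) < inv w (w x)" using mono[of "w y" "w x"] xy by simp
  then show False using xy w by simp
qed

definition word_perm :: "nat list \<Rightarrow> nat \<Rightarrow> nat" where
  "word_perm ws = foldr (\<lambda>i w. sgen i \<circ> w) ws id"

definition valid_word :: "nat \<Rightarrow> nat list \<Rightarrow> bool" where
  "valid_word r ws \<longleftrightarrow> (\<forall>i\<in>set ws. 1 \<le> i \<and> i < r)"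

definition reduced_word :: "nat \<Rightarrow> nat list \<Rightarrow> bool" where
  "reduced_word r ws \<longleftrightarrow> valid_word r ws \<and> length ws = plen r (word_perm ws)"

lemma word_perm_Nil [simp]: "word_perm [] = id"
  and word_perm_Cons [simp]: "word_perm (i # ws) = sgen i \<circ> word_perm ws"
  by (simp_all add: word_perm_def)

lemma valid_word_Nil [simp]: "valid_word r []"
  and valid_word_Cons [simp]: "valid_word r (i # ws) \<longleftrightarrow> 1 \<le> i \<and> i < r \<and> valid_word r ws"
  by (auto simp: valid_word_def)

lemma word_perm_Wr: "valid_word r ws \<Longrightarrow> word_perm ws \<in> Wr r"
  by (induction ws) (auto simp: sgen_comp_Wr)

lemma plen_word_perm_le: "valid_word r ws \<Longrightarrow> plen r (word_perm ws) \<le> length ws"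
proof (induction ws)
  case (Cons i ws)
  then have "plen r (sgen i \<circ> word_perm ws) \<le> Suc (plen r (word_perm ws))"
    using plen_left_descent plen_not_left_descent word_perm_Wr
    by (cases "left_descent (word_perm ws) i") fastforce+
  moreover have "plen r (word_perm ws) \<le> length ws" using Cons by simp
  ultimately show ?case by (simp only: word_perm_Cons length_Cons)
qed simp

lemma ex_reduced_word: "w \<in> Wr r \<Longrightarrow> \<exists>ws. reduced_word r ws \<and> word_perm ws = w"
proof (induction "plen r w" arbitrary: w)
  case 0
  then show ?case
    using plen_eq_0_imp_id[of w r] by (intro exI[of _ "[]"]) (auto simp: reduced_word_def)
next
  case (Suc n)
  obtain i where i: "1 \<le> i" "i < r" "left_descent w i"
    using ex_left_descent[OF Suc.prems] Suc.hyps(2) by auto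
  have "plen r (sgen i \<circ> w) = n"
    using plen_left_descent[OF Suc.prems i] Suc.hyps(2) by simp
  then obtain ws where "reduced_word r ws" "word_perm ws = sgen i \<circ> w"
    using Suc.hyps(1) sgen_comp_Wr[OF i(1,2) Suc.prems] by metis
  then show ?case
    using i plen_left_descent[OF Suc.prems i]
    by (intro exI[of _ "i # ws"]) (auto simp: reduced_word_def)
qed

lemma reduced_word_ConsD:
  assumes "reduced_word r (i # ws)"
  shows "reduced_word r ws" and "left_descent (word_perm (i # ws)) i"
proof -
  have i: "1 \<le> i" "i < r" and ws: "valid_word r ws"
    using assms by (auto simp: reduced_word_def)
  define w where "w = word_perm ws"
  have w: "w \<in> Wr r" using word_perm_Wr[OF ws] by (simp add: w_def)
  have len: "plen r (sgen i \<circ> w) = Suc (length ws)" "plen r w \<le> length ws"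
    using assms plen_word_perm_le[OF ws] by (auto simp: reduced_word_def w_def)
  have "\<not> left_descent w i"
    using plen_left_descent[OF w i] plen_not_left_descent[OF w i] len by auto
  then show "reduced_word r ws" "left_descent (word_perm (i # ws)) i"
    using plen_not_left_descent[OF w i] left_descent_sgen_comp_self[OF w i] len ws
    by (simp_all add: reduced_word_def w_def)
qed

lemma reduced_word_ConsI:
  assumes "reduced_word r ws" "1 \<le> i" "i < r" "left_descent (sgen i \<circ> word_perm ws) i"
  shows "reduced_word r (i # ws)"
proof -
  have "word_perm ws \<in> Wr r" using assms(1) by (simp add: reduced_word_def word_perm_Wr)
  then show ?thesis
    using assms plen_left_descent[OF sgen_comp_Wr[OF assms(2,3)]]
    by (simp add: reduced_word_def)
qed

lemma ex_reduced_word_Cons: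
  assumes w: "w \<in> Wr r" and i: "1 \<le> i" "i < r" and d: "left_descent w i"
  shows "\<exists>ws. reduced_word r (i # ws) \<and> word_perm (i # ws) = w"
proof -
  obtain ws where "reduced_word r ws" "word_perm ws = sgen i \<circ> w"
    using ex_reduced_word[OF sgen_comp_Wr[OF i w]] by blast
  then show ?thesis
    using reduced_word_ConsI[of r ws i] i d by auto
qed

lemma sgen_Suc: "sgen (Suc k) k = Suc k" "sgen (Suc k) (Suc k) = k"
  "x \<noteq> k \<Longrightarrow> x \<noteq> Suc k \<Longrightarrow> sgen (Suc k) x = x"
  by (simp_all add: sgen_apply)

lemma sgen_comm:
  assumes "1 \<le> i" "1 \<le> j" "i + 1 < j \<or> j + 1 < i"
  shows "sgen i \<circ> (sgen j \<circ> w) = sgen j \<circ> (sgen i \<circ> w)"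
proof -
  obtain k l where kl: "i = Suc k" "j = Suc l" using assms by (metis Suc_le_D One_nat_def)
  have "sgen i (sgen j y) = sgen j (sgen i y)" for y
    using assms unfolding kl
    by (cases "y \<in> {k, Suc k, l, Suc l}") (auto simp: sgen_Suc)
  then show ?thesis by (simp add: fun_eq_iff)
qed

lemma sgen_braid:
  assumes "1 \<le> i" "1 \<le> j" "j = i + 1 \<or> i = j + 1"
  shows "sgen i \<circ> (sgen j \<circ> (sgen i \<circ> w)) = sgen j \<circ> (sgen i \<circ> (sgen j \<circ> w))"
proof -
  obtain k l where kl: "i = Suc k" "j = Suc l" using assms by (metis Suc_le_D One_nat_def)
  have "sgen i (sgen j (sgen i y)) = sgen j (sgen i (sgen j y))" for y
    using assms unfolding kl
    by (cases "y \<in> {k, Suc k, l, Suc l}") (auto simp: sgen_Suc)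
  then show ?thesis by (simp add: fun_eq_iff)
qed

lemma left_descent_far:
  assumes w: "w \<in> Wr r" and "1 \<le> i" "1 \<le> j" and far: "i + 1 < j \<or> j + 1 < i"
    and d: "left_descent w j"
  shows "left_descent (sgen i \<circ> w) j"
proof -
  obtain k l where kl: "i = Suc k" "j = Suc l" using assms by (metis Suc_le_D One_nat_def)
  have "sgen i j = j" "sgen i (j - 1) = j - 1" using far unfolding kl by (auto simp: sgen_Suc)
  then show ?thesis using d unfolding left_descent_sgen_comp[OF w] by (simp add: left_descent_def)
qed

lemma left_descent_adjacent:
  assumes w: "w \<in> Wr r" and ij: "1 \<le> i" "1 \<le> j" "i < r" "j < r"
    and adj: "j = i + 1 \<or> i = j + 1" and di: "left_descent w i" and dj: "left_descent w j"
  shows "left_descent (sgen i \<circ> w) j" and "left_descent (sgen j \<circ> (sgen i \<circ> w)) i"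
proof -
  have wi: "sgen i \<circ> w \<in> Wr r" using w ij by (simp add: sgen_comp_Wr)
  obtain k l where kl: "i = Suc k" "j = Suc l" using ij by (metis Suc_le_D One_nat_def)
  have "left_descent (sgen i \<circ> w) j \<and> left_descent (sgen j \<circ> (sgen i \<circ> w)) i"
    using adj di dj
    unfolding left_descent_sgen_comp[OF wi] left_descent_sgen_comp[OF w] inv_sgen_comp[OF w]
    unfolding kl by (auto simp: sgen_Suc left_descent_def)
  then show "left_descent (sgen i \<circ> w) j" "left_descent (sgen j \<circ> (sgen i \<circ> w)) i"
    by auto
qed

section \<open>Representations of the Hecke algebra and Matsumoto's theorem\<close>

locale hecke_rep =
  fixes I :: "'i set" and r :: nat and rho :: "nat \<Rightarrow> 'i lmap"
  assumes finite_I: "finite I"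
    and rho_lin: "\<And>i. 1 \<le> i \<Longrightarrow> i < r \<Longrightarrow> rho i \<in> lin I"
    and rho_quadratic: "\<And>i. 1 \<le> i \<Longrightarrow> i < r \<Longrightarrow>
      mmul I (rho i) (rho i) = msc cc (rho i) + mid I"
    and rho_braid: "\<And>i. 1 \<le> i \<Longrightarrow> i + 1 < r \<Longrightarrow>
      mmul I (rho i) (mmul I (rho (i + 1)) (rho i)) = mmul I (rho (i + 1)) (mmul I (rho i) (rho (i + 1)))"
    and rho_far_comm: "\<And>i j. 1 \<le> i \<Longrightarrow> i + 1 < j \<Longrightarrow> j < r \<Longrightarrow>
      mmul I (rho i) (rho j) = mmul I (rho j) (rho i)"
begin

definition word_op :: "nat list \<Rightarrow> 'i lmap" where
  "word_op ws = foldr (\<lambda>i M. mmul I (rho i) M) ws (mid I)"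

lemma word_op_Nil [simp]: "word_op [] = mid I"
  and word_op_Cons [simp]: "word_op (i # ws) = mmul I (rho i) (word_op ws)"
  by (simp_all add: word_op_def)

lemma word_op_lin: "valid_word r ws \<Longrightarrow> word_op ws \<in> lin I"
  by (induction ws) (auto simp: rho_lin)

lemma mmul_assoc_I: "mmul I (mmul I a b) c = mmul I a (mmul I b c)"
  by (rule mmul_assoc[OF finite_I])

definition reduced_words_agree :: "nat \<Rightarrow> bool" where
  "reduced_words_agree n \<longleftrightarrow> (\<forall>a b. reduced_word r a \<and> reduced_word r b \<and> length a = n
     \<and> word_perm a = word_perm b \<longrightarrow> word_op a = word_op b)"

lemma word_op_Cons_same_head:
  assumes agree: "reduced_words_agree n"
    and a: "reduced_word r (k # a)" and b: "reduced_word r (k # b)" and "length a = n"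
    and eq: "word_perm (k # a) = word_perm (k # b)"
  shows "word_op (k # a) = word_op (k # b)"
proof -
  have "word_perm a = sgen k \<circ> word_perm (k # a)" by simp
  also have "\<dots> = word_perm b" unfolding eq by simp
  finally show ?thesis
    using agree reduced_word_ConsD(1)[OF a] reduced_word_ConsD(1)[OF b] \<open>length a = n\<close>
    by (simp add: reduced_words_agree_def)
qed

lemma word_op_Cons_far:
  assumes agree: "reduced_words_agree n"
    and ia: "reduced_word r (i # a)" and jb: "reduced_word r (j # b)" and "length a = n"
    and eq: "word_perm (i # a) = word_perm (j # b)" and far: "i + 1 < j \<or> j + 1 < i"
  shows "word_op (i # a) = word_op (j # b)"
proof -
  define w where "w = word_perm (i # a)"
  have i: "1 \<le> i" "i < r" and j: "1 \<le> j" "j < r" and w: "w \<in> Wr r"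
    using ia jb word_perm_Wr by (auto simp: reduced_word_def w_def simp del: word_perm_Cons)
  have di: "left_descent w i" and dj: "left_descent w j"
    using reduced_word_ConsD(2)[OF ia] reduced_word_ConsD(2)[OF jb] eq by (simp_all add: w_def)
  obtain c where c: "reduced_word r (j # c)" "word_perm (j # c) = sgen i \<circ> w"
    using ex_reduced_word_Cons[OF sgen_comp_Wr[OF i w] j left_descent_far[OF w i(1) j(1) far dj]]
    by blast
  have x: "reduced_word r (i # j # c)" and px: "word_perm (i # j # c) = w"
    using reduced_word_ConsI[OF c(1) i] c(2) di by simp_all
  have py: "word_perm (j # i # c) = w"
    using px sgen_comm[OF i(1) j(1) far, of "word_perm c"] by simp
  have y: "reduced_word r (j # i # c)"
    using x px py i j c(1) by (simp add: reduced_word_def)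
  have "mmul I (rho i) (rho j) = mmul I (rho j) (rho i)"
    using rho_far_comm i j far by (metis Suc_eq_plus1 Suc_lessD less_trans_Suc)
  then have "word_op (i # j # c) = word_op (j # i # c)"
    by (simp add: mmul_assoc_I[symmetric])
  moreover have "length b = n"
    using ia jb eq \<open>length a = n\<close> by (simp add: reduced_word_def del: word_perm_Cons)
  ultimately show ?thesis
    using word_op_Cons_same_head[OF agree ia x] word_op_Cons_same_head[OF agree jb y]
      \<open>length a = n\<close> px py eq by (simp add: w_def)
qed

lemma word_op_Cons_adjacent:
  assumes agree: "reduced_words_agree n"
    and ia: "reduced_word r (i # a)" and jb: "reduced_word r (j # b)" and "length a = n"
    and eq: "word_perm (i # a) = word_perm (j # b)" and adj: "j = i + 1 \<or> i = j + 1"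
  shows "word_op (i # a) = word_op (j # b)"
proof -
  define w where "w = word_perm (i # a)"
  have i: "1 \<le> i" "i < r" and j: "1 \<le> j" "j < r" and w: "w \<in> Wr r"
    using ia jb word_perm_Wr by (auto simp: reduced_word_def w_def simp del: word_perm_Cons)
  have di: "left_descent w i" and dj: "left_descent w j"
    using reduced_word_ConsD(2)[OF ia] reduced_word_ConsD(2)[OF jb] eq by (simp_all add: w_def)
  note desc = left_descent_adjacent[OF w i(1) j(1) i(2) j(2) adj di dj]
  obtain c where c: "reduced_word r (i # c)" "word_perm (i # c) = sgen j \<circ> (sgen i \<circ> w)"
    using ex_reduced_word_Cons[OF sgen_comp_Wr[OF j sgen_comp_Wr[OF i w]] i desc(2)] by blast
  have "reduced_word r (j # i # c)"
    using reduced_word_ConsI[OF c(1) j] c(2) desc(1) by simp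
  then have x: "reduced_word r (i # j # i # c)" and px: "word_perm (i # j # i # c) = w"
    using reduced_word_ConsI[OF _ i] c(2) di by simp_all
  have py: "word_perm (j # i # j # c) = w"
    using px sgen_braid[OF i(1) j(1) adj, of "word_perm c"] by simp
  have y: "reduced_word r (j # i # j # c)"
    using x px py i j c(1) by (simp add: reduced_word_def)
  have "mmul I (rho i) (mmul I (rho j) (rho i)) = mmul I (rho j) (mmul I (rho i) (rho j))"
    using rho_braid i j adj by (metis Suc_eq_plus1)
  then have "word_op (i # j # i # c) = word_op (j # i # j # c)"
    by (simp add: mmul_assoc_I[symmetric])
  moreover have "length b = n"
    using ia jb eq \<open>length a = n\<close> by (simp add: reduced_word_def del: word_perm_Cons)
  ultimately show ?thesis
    using word_op_Cons_same_head[OF agree ia x] word_op_Cons_same_head[OF agree jb y]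
      \<open>length a = n\<close> px py eq by (simp add: w_def)
qed

lemma reduced_words_agree_Suc:
  assumes agree: "reduced_words_agree n"
  shows "reduced_words_agree (Suc n)"
  unfolding reduced_words_agree_def
proof (intro allI impI, elim conjE)
  fix a b
  assume a: "reduced_word r a" and b: "reduced_word r b" and "length a = Suc n"
    and eq: "word_perm a = word_perm b"
  obtain i a' where a': "a = i # a'" using \<open>length a = Suc n\<close> by (cases a) auto
  obtain j b' where b': "b = j # b'"
    using \<open>length a = Suc n\<close> a b eq by (cases b) (auto simp: reduced_word_def)
  have "length a' = n" using \<open>length a = Suc n\<close> a' by simp
  consider "i = j" | "i + 1 < j \<or> j + 1 < i" | "j = i + 1 \<or> i = j + 1" by linarith
  then show "word_op a = word_op b"
    using word_op_Cons_same_head[OF agree] word_op_Cons_far[OF agree] word_op_Cons_adjacent[OF agree]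
      a b eq \<open>length a' = n\<close> unfolding a' b' by cases blast+
qed

lemma reduced_words_agree_0: "reduced_words_agree 0"
  unfolding reduced_words_agree_def
proof (intro allI impI)
  fix a b
  assume "reduced_word r a \<and> reduced_word r b \<and> length a = 0 \<and> word_perm a = word_perm b"
  then have "a = []" and b: "reduced_word r b" and "word_perm b = id"
    by (auto simp: id_def)
  then have "length b = 0"
    unfolding reduced_word_def by (simp only: plen_id)
  then show "word_op a = word_op b" using \<open>a = []\<close> by simp
qed

theorem word_op_reduced_eq:
  assumes "reduced_word r a" "reduced_word r b" "word_perm a = word_perm b"
  shows "word_op a = word_op b"
proof -
  have "reduced_words_agree n" for n
    by (induction n) (use reduced_words_agree_0 reduced_words_agree_Suc in blast)+
  then show ?thesis
    using assms unfolding reduced_words_agree_def by blast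
qed

definition perm_op :: "(nat \<Rightarrow> nat) \<Rightarrow> 'i lmap" where
  "perm_op w = word_op (SOME ws. reduced_word r ws \<and> word_perm ws = w)"

lemma perm_op_word_perm: "reduced_word r ws \<Longrightarrow> perm_op (word_perm ws) = word_op ws"
  unfolding perm_op_def
  by (rule someI2[of _ ws]) (auto intro: word_op_reduced_eq)

lemma perm_op_lin: "w \<in> Wr r \<Longrightarrow> perm_op w \<in> lin I"
  using ex_reduced_word[of w r] perm_op_word_perm word_op_lin by (auto simp: reduced_word_def)

lemma perm_op_id: "perm_op id = mid I"
  using perm_op_word_perm[of "[]"] by (simp add: reduced_word_def)

lemma rho_perm_op_ascent:
  assumes w: "w \<in> Wr r" and i: "1 \<le> i" "i < r" and d: "\<not> left_descent w i"
  shows "mmul I (rho i) (perm_op w) = perm_op (sgen i \<circ> w)"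
proof -
  obtain ws where ws: "reduced_word r ws" "word_perm ws = w"
    using ex_reduced_word[OF w] by blast
  then have "reduced_word r (i # ws)"
    using reduced_word_ConsI[OF ws(1) i] left_descent_sgen_comp_self[OF w i] d by simp
  then show ?thesis
    using perm_op_word_perm[OF ws(1)] perm_op_word_perm[of "i # ws"] ws by simp
qed

lemma rho_perm_op_descent:
  assumes w: "w \<in> Wr r" and i: "1 \<le> i" "i < r" and d: "left_descent w i"
  shows "mmul I (rho i) (perm_op w) = msc cc (perm_op w) + perm_op (sgen i \<circ> w)"
proof -
  define v where "v = sgen i \<circ> w"
  have v: "v \<in> Wr r" using w i by (simp add: v_def sgen_comp_Wr)
  have w_eq: "perm_op w = mmul I (rho i) (perm_op v)"
    using rho_perm_op_ascent[OF v i] left_descent_sgen_comp_self[OF w i] d by (simp add: v_def)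
  have "mmul I (rho i) (perm_op w) = mmul I (mmul I (rho i) (rho i)) (perm_op v)"
    by (simp add: w_eq mmul_assoc_I[symmetric])
  also have "\<dots> = msc cc (perm_op w) + perm_op v"
    using rho_quadratic[OF i] perm_op_lin[OF v] finite_I
    by (simp add: mmul_add_left mmul_msc_left w_eq)
  finally show ?thesis by (simp add: v_def)
qed

definition perm_op_comb :: "((nat \<Rightarrow> nat) \<Rightarrow> K) \<Rightarrow> 'i lmap" where
  "perm_op_comb g = (\<Sum>w\<in>Wr r. msc (g w) (perm_op w))"

lemma perm_op_comb_lin: "perm_op_comb g \<in> lin I"
  unfolding perm_op_comb_def by (intro lin_sum lin_msc perm_op_lin)

lemma perm_op_comb_add: "perm_op_comb (\<lambda>x. g x + h x) = perm_op_comb g + perm_op_comb h"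
  unfolding perm_op_comb_def by (simp add: msc_add_scalar sum.distrib)

lemma perm_op_comb_restrict: "perm_op_comb (\<lambda>x. if x \<in> Wr r then g x else 0) = perm_op_comb g"
  unfolding perm_op_comb_def by (intro sum.cong) auto

lemma perm_op_comb_scale: "perm_op_comb (\<lambda>x. c * g x) = msc c (perm_op_comb g)"
  unfolding perm_op_comb_def by (simp add: msc_sum_right)

lemma perm_op_comb_delta_id: "perm_op_comb (\<lambda>w. if w = id then 1 else 0) = mid I"
proof -
  have "perm_op_comb (\<lambda>w. if w = id then 1 else 0) = (\<Sum>w\<in>Wr r. if w = id then perm_op w else 0)"
    unfolding perm_op_comb_def by (intro sum.cong) auto
  then show ?thesis using perm_op_id by (simp add: finite_Wr)
qed

lemma regL_column:
  assumes y: "y \<in> Wr r" and i: "1 \<le> i" "i < r"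
  shows "(\<Sum>x\<in>Wr r. msc (regL r i x y) (perm_op x)) = mmul I (rho i) (perm_op y)"
proof -
  have plen_lt: "plen r (sgen i \<circ> y) < plen r y \<longleftrightarrow> left_descent y i"
    using plen_left_descent[OF y i] plen_not_left_descent[OF y i] by (cases "left_descent y i") auto
  have "(\<Sum>x\<in>Wr r. msc (regL r i x y) (perm_op x)) =
      (\<Sum>x\<in>Wr r. (if x = sgen i \<circ> y then perm_op x else 0)
        + (if x = y then (if left_descent y i then msc cc (perm_op x) else 0) else 0))"
    using y plen_lt by (intro sum.cong refl) (simp add: regL_def msc_add_scalar)
  also have "\<dots> = perm_op (sgen i \<circ> y) + (if left_descent y i then msc cc (perm_op y) else 0)"
    using sgen_comp_Wr[OF i y] y by (simp add: sum.distrib finite_Wr)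
  also have "\<dots> = mmul I (rho i) (perm_op y)"
    using rho_perm_op_ascent[OF y i] rho_perm_op_descent[OF y i] by (auto simp: add.commute)
  finally show ?thesis .
qed

lemma perm_op_comb_mvec_regL:
  "perm_op_comb (mvec (Wr r) (regL r i) g) = mmul I (rho i) (perm_op_comb g)" if "1 \<le> i" "i < r"
proof -
  have "perm_op_comb (mvec (Wr r) (regL r i) g)
      = (\<Sum>x\<in>Wr r. \<Sum>y\<in>Wr r. msc (g y) (msc (regL r i x y) (perm_op x)))"
    unfolding perm_op_comb_def mvec_def by (simp add: msc_sum_left mult.commute)
  also have "\<dots> = (\<Sum>y\<in>Wr r. msc (g y) (\<Sum>x\<in>Wr r. msc (regL r i x y) (perm_op x)))"
    by (subst sum.swap) (simp add: msc_sum_right)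
  also have "\<dots> = mmul I (rho i) (perm_op_comb g)"
    unfolding perm_op_comb_def using regL_column[OF _ that]
    by (simp add: mmul_sum_right mmul_msc_right)
  finally show ?thesis .
qed

lemma nceval_lin: "ncwf r p \<Longrightarrow> nceval I rho p \<in> lin I"
  by (induction p) (auto simp: rho_lin)

lemma perm_op_comb_mvec_nceval:
  "ncwf r p \<Longrightarrow> perm_op_comb (mvec (Wr r) (nceval (Wr r) (regL r) p) g)
    = mmul I (nceval I rho p) (perm_op_comb g)"
proof (induction p arbitrary: g)
  case (Gen i)
  then show ?case by (simp add: perm_op_comb_mvec_regL)
next
  case (Scal c)
  then show ?case
    using finite_I perm_op_comb_lin
    by (simp add: mvec_msc_mid finite_Wr perm_op_comb_restrict perm_op_comb_scale mmul_msc_left)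
next
  case (Plus a b)
  then show ?case
    unfolding nceval.simps mvec_add perm_op_comb_add mmul_add_left by simp
next
  case (Times a b)
  then show ?case by (simp add: mvec_mmul mmul_assoc_I[symmetric])
qed

lemma nceval_eq_perm_op_comb:
  assumes "ncwf r p"
  shows "nceval I rho p = perm_op_comb (\<lambda>x. nceval (Wr r) (regL r) p x id)"
proof -
  have "mvec (Wr r) (nceval (Wr r) (regL r) p) (\<lambda>w. if w = id then 1 else 0)
      = (\<lambda>x. nceval (Wr r) (regL r) p x id)"
    unfolding mvec_def by (simp add: if_distrib[where f="\<lambda>u. _ * u"] finite_Wr cong: if_cong)
  then show ?thesis
    using perm_op_comb_mvec_nceval[OF assms, of "\<lambda>w. if w = id then 1 else 0"]
      nceval_lin[OF assms] finite_I
    by (simp add: perm_op_comb_delta_id)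
qed

(* C_q is defined by a condition in the regular representation; this transfers it to any other. *)
corollary nceval_eq_if_regular_eq:
  assumes "ncwf r p" "ncwf r p'" "nceval (Wr r) (regL r) p = nceval (Wr r) (regL r) p'"
  shows "nceval I rho p = nceval I rho p'"
  using nceval_eq_perm_op_comb[OF assms(1)] nceval_eq_perm_op_comb[OF assms(2)] assms(3) by simp

end

section \<open>The q-permutation representation\<close>

definition swap_pos :: "nat \<Rightarrow> nat list \<Rightarrow> nat list" where
  "swap_pos i x = x[i - 1 := x ! i, i := x ! (i - 1)]"

lemma tidx_iff: "x \<in> tidx m r \<longleftrightarrow> length x = r \<and> (\<forall>j<r. 1 \<le> x ! j \<and> x ! j \<le> 2 * m)"
  unfolding tidx_def by (auto simp: set_conv_nth)

lemma finite_tidx: "finite (tidx m r)"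
  using finite_lists_length_eq[of "{1..2*m}" r] unfolding tidx_def by (simp add: conj_commute)

lemma length_swap_pos [simp]: "length (swap_pos i x) = length x"
  by (simp add: swap_pos_def)

lemma nth_swap_pos: "1 \<le> i \<Longrightarrow> i < length x \<Longrightarrow> j < length x \<Longrightarrow>
    swap_pos i x ! j = (if j = i - 1 then x ! i else if j = i then x ! (i - 1) else x ! j)"
  by (auto simp: swap_pos_def nth_list_update)

lemma swap_pos_swap_pos [simp]: "1 \<le> i \<Longrightarrow> i < length x \<Longrightarrow> swap_pos i (swap_pos i x) = x"
  by (rule nth_equalityI) (auto simp: nth_swap_pos)

lemma swap_pos_eq_self_iff:
  "1 \<le> i \<Longrightarrow> i < length x \<Longrightarrow> swap_pos i x = x \<longleftrightarrow> x ! (i - 1) = x ! i"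
proof
  assume "1 \<le> i" "i < length x" "swap_pos i x = x"
  then show "x ! (i - 1) = x ! i" by (metis nth_swap_pos order.refl)
next
  assume "1 \<le> i" "i < length x" "x ! (i - 1) = x ! i"
  then show "swap_pos i x = x" by (intro nth_equalityI) (auto simp: nth_swap_pos)
qed

lemma swap_pos_in_tidx_iff: "1 \<le> i \<Longrightarrow> i < r \<Longrightarrow> swap_pos i x \<in> tidx m r \<longleftrightarrow> x \<in> tidx m r"
  by (cases "length x = r") (auto simp: tidx_def swap_pos_def)

lemma eq_if_agree_outside:
  assumes "length z = length x" "1 \<le> i" "i < length x"
    and "\<forall>j<length x. j \<noteq> i - 1 \<and> j \<noteq> i \<longrightarrow> x ! j = z ! j"
  shows "z ! (i - 1) = x ! (i - 1) \<Longrightarrow> z ! i = x ! i \<Longrightarrow> z = x"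
    and "z ! (i - 1) = x ! i \<Longrightarrow> z ! i = x ! (i - 1) \<Longrightarrow> z = swap_pos i x"
  using assms by (auto intro!: nth_equalityI simp: nth_swap_pos)

definition diag_coef :: "nat \<Rightarrow> nat \<Rightarrow> nat \<Rightarrow> K" where
  "diag_coef m a b =
    (if a = b then (if odd_v m a then - inverse qq else qq) else if a < b then cc else 0)"

definition swap_coef :: "nat \<Rightarrow> nat \<Rightarrow> nat \<Rightarrow> K" where
  "swap_coef m a b = psgn (odd_v m a \<and> odd_v m b)"

lemma tprime_zero: "kl' \<noteq> kl \<Longrightarrow> kl' \<noteq> (snd kl, fst kl) \<Longrightarrow> tprime m kl' kl = 0"
  by (cases kl) (auto simp: tprime_def)

lemma diag_coef_tprime:
  "diag_coef m a b = ((qq + inverse qq) * tprime m (a, b) (a, b) + cc) / 2"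
proof (cases "a = b")
  case True
  then show ?thesis
    using qq_nonzero by (auto simp: diag_coef_def tprime_def psgn_def cc_def field_simps)
next
  case False
  then show ?thesis
    using qq_plus_inverse_nonzero by (auto simp: diag_coef_def tprime_def)
qed

lemma swap_coef_tprime:
  "a \<noteq> b \<Longrightarrow> swap_coef m a b = (qq + inverse qq) * tprime m (a, b) (b, a) / 2"
  using qq_plus_inverse_nonzero by (auto simp: swap_coef_def tprime_def conj_commute)

lemma piT_entry:
  assumes x: "x \<in> tidx m r" and i: "1 \<le> i" "i < r"
  defines "a \<equiv> x ! (i - 1)" and "b \<equiv> x ! i"
  shows "piT m r i x z = (if z = x then diag_coef m a b else 0)
     + (if z = swap_pos i x \<and> a \<noteq> b then swap_coef m a b else 0)"
proof -
  have lx: "length x = r" using x by (simp add: tidx_iff)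
  consider "z = x" | "z = swap_pos i x" "a \<noteq> b" | "z \<noteq> x" "\<not> (z = swap_pos i x \<and> a \<noteq> b)"
    by blast
  then show ?thesis
  proof cases
    case 1
    have "swap_pos i x = x \<Longrightarrow> a = b" using swap_pos_eq_self_iff i lx by (simp add: a_def b_def)
    then show ?thesis
      using 1 x by (auto simp: piT_def piTp_def mid_def diag_coef_tprime a_def b_def)
  next
    case 2
    have "z \<noteq> x" using 2 i lx swap_pos_eq_self_iff by (auto simp: a_def b_def)
    moreover have "z \<in> tidx m r" using 2 x swap_pos_in_tidx_iff[OF i] by simp
    ultimately show ?thesis
      using 2 x i lx
      by (auto simp: piT_def piTp_def mid_def swap_coef_tprime nth_swap_pos a_def b_def)
  next
    case 3
    have "piTp m r i x z = 0"
    proof (cases "z \<in> tidx m r \<and> (\<forall>j<r. j \<noteq> i - 1 \<and> j \<noteq> i \<longrightarrow> x ! j = z ! j)")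
      case True
      then have lz: "length z = r" by (simp add: tidx_iff)
      have "(a, b) \<noteq> (z ! (i - 1), z ! i)" "(a, b) \<noteq> (z ! i, z ! (i - 1))"
        using eq_if_agree_outside[of z x i] True 3 lx lz i
        by (auto simp: a_def b_def)
      then show ?thesis
        using True x by (simp add: piTp_def tprime_zero a_def b_def)
    qed (auto simp: piTp_def)
    then show ?thesis using 3 by (auto simp: piT_def mid_def)
  qed
qed

lemma mmul_piT_apply:
  assumes i: "1 \<le> i" "i < r" and f: "f \<in> lin (tidx m r)"
  shows "mmul (tidx m r) (piT m r i) f x y = (if x \<in> tidx m r then
     diag_coef m (x ! (i - 1)) (x ! i) * f x y
     + (if x ! (i - 1) \<noteq> x ! i then swap_coef m (x ! (i - 1)) (x ! i) * f (swap_pos i x) y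
        else 0) else 0)"
proof (cases "x \<in> tidx m r")
  case False
  then show ?thesis by (simp add: mmul_def piT_def piTp_def mid_def)
next
  case True
  have "swap_pos i x \<in> tidx m r" using True swap_pos_in_tidx_iff[OF i] by simp
  then show ?thesis
    using True finite_tidx
    by (simp add: mmul_def piT_entry[OF True i] distrib_right sum.distrib if_distrib[where f="\<lambda>u. u * _"]
        cong: if_cong)
qed

lemma diag_coef_quadratic:
  "diag_coef m a b * diag_coef m a b + (if a \<noteq> b then swap_coef m a b * swap_coef m b a else 0)
    = cc * diag_coef m a b + 1"
  using qq_nonzero
  by (cases a b rule: linorder_cases)
    (auto simp: diag_coef_def swap_coef_def psgn_def cc_def field_simps)

lemma diag_swap_coef:
  "a \<noteq> b \<Longrightarrow> diag_coef m a b * swap_coef m a b + swap_coef m a b * diag_coef m b a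
    = cc * swap_coef m a b"
  by (cases a b rule: linorder_cases) (auto simp: diag_coef_def swap_coef_def conj_commute)

lemma piT_lin: "piT m r i \<in> lin (tidx m r)"
  by (simp add: lin_def piT_def piTp_def mid_def)

lemma piT_quadratic:
  assumes i: "1 \<le> i" "i < r"
  shows "mmul (tidx m r) (piT m r i) (piT m r i) = msc cc (piT m r i) + mid (tidx m r)"
proof -
  let ?I = "tidx m r" and ?T = "piT m r i"
  have "mmul ?I ?T (mmul ?I ?T f) x y = cc * mmul ?I ?T f x y + f x y"
    if f: "f \<in> lin ?I" for f x y
  proof (cases "x \<in> ?I")
    case True
    obtain a b where ab: "x ! (i - 1) = a" "x ! i = b" by simp
    have lx: "length x = r" using True by (simp add: tidx_iff)
    have sw: "swap_pos i x \<in> ?I" "swap_pos i x ! (i - 1) = b" "swap_pos i x ! i = a"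
      "swap_pos i (swap_pos i x) = x"
      using True i lx swap_pos_in_tidx_iff[OF i] ab by (auto simp: nth_swap_pos)
    have Tf: "mmul ?I ?T f x y = diag_coef m a b * f x y
        + (if a \<noteq> b then swap_coef m a b * f (swap_pos i x) y else 0)"
      "mmul ?I ?T f (swap_pos i x) y = diag_coef m b a * f (swap_pos i x) y
        + (if b \<noteq> a then swap_coef m b a * f x y else 0)"
      using True sw ab by (simp_all add: mmul_piT_apply[OF i f])
    define D S where "D = diag_coef m a b" and "S = swap_coef m a b"
    define F G where "F = f x y" and "G = f (swap_pos i x) y"
    have "mmul ?I ?T (mmul ?I ?T f) x y = D * mmul ?I ?T f x y
        + (if a \<noteq> b then S * mmul ?I ?T f (swap_pos i x) y else 0)"
      using True ab by (simp add: mmul_piT_apply[OF i lin_mmul[OF piT_lin f]] D_def S_def)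
    also have "\<dots> = (D * D + (if a \<noteq> b then S * swap_coef m b a else 0)) * F
        + (if a \<noteq> b then (D * S + S * diag_coef m b a) * G else 0)"
      unfolding Tf D_def[symmetric] S_def[symmetric] F_def[symmetric] G_def[symmetric]
      by (simp add: algebra_simps)
    also have "\<dots> = (cc * D + 1) * F + (if a \<noteq> b then cc * S * G else 0)"
      unfolding D_def S_def diag_coef_quadratic
      by (cases "a = b") (simp_all add: diag_swap_coef)
    also have "\<dots> = cc * (D * F + (if a \<noteq> b then S * G else 0)) + F"
      by (simp add: algebra_simps)
    finally show ?thesis
      using Tf by (simp add: D_def S_def F_def G_def)
  qed (use f in \<open>simp add: mmul_piT_apply[OF i] lin_mmul piT_lin linD1\<close>)
  from this[OF lin_mid] show ?thesis
    using piT_lin finite_tidx by (simp add: fun_eq_iff msc_def)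
qed

lemma piT_far_comm:
  assumes ij: "1 \<le> i" "i + 1 < j" "j < r"
  shows "mmul (tidx m r) (piT m r i) (piT m r j) = mmul (tidx m r) (piT m r j) (piT m r i)"
proof -
  let ?I = "tidx m r"
  have i: "1 \<le> i" "i < r" and j: "1 \<le> j" "j < r" using ij by auto
  have "mmul ?I (piT m r i) (mmul ?I (piT m r j) f) x y = mmul ?I (piT m r j) (mmul ?I (piT m r i) f) x y"
    if f: "f \<in> lin ?I" for f x y
  proof (cases "x \<in> ?I")
    case x: True
    have l: "length x = r" using x by (simp add: tidx_iff)
    have "swap_pos i x \<in> ?I" "swap_pos j x \<in> ?I"
      using x swap_pos_in_tidx_iff[OF i] swap_pos_in_tidx_iff[OF j] by simp_all
    moreover have "swap_pos i (swap_pos j x) = swap_pos j (swap_pos i x)"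
      using ij l by (intro nth_equalityI) (auto simp: nth_swap_pos)
    moreover have "swap_pos i x ! (j - 1) = x ! (j - 1)" "swap_pos i x ! j = x ! j"
      "swap_pos j x ! (i - 1) = x ! (i - 1)" "swap_pos j x ! i = x ! i"
      using ij l by (auto simp: nth_swap_pos)
    ultimately show ?thesis
      using x
      unfolding mmul_piT_apply[OF i lin_mmul[OF piT_lin f]] mmul_piT_apply[OF j lin_mmul[OF piT_lin f]]
      by (simp add: mmul_piT_apply[OF i f] mmul_piT_apply[OF j f] algebra_simps)
  qed (simp add: mmul_def piT_def piTp_def mid_def)
  from this[OF lin_mid] show ?thesis
    using piT_lin finite_tidx by (simp add: fun_eq_iff)
qed

(* pi_r(T_i) and pi_r(T_(i+1)) as seen on the three tensor slots they touch; the braid relation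
   reduces to the Yang-Baxter identity below *)
definition slot12 :: "nat \<Rightarrow> (nat \<Rightarrow> nat \<Rightarrow> nat \<Rightarrow> K) \<Rightarrow> nat \<Rightarrow> nat \<Rightarrow> nat \<Rightarrow> K" where
  "slot12 m F u v w = diag_coef m u v * F u v w + (if u \<noteq> v then swap_coef m u v * F v u w else 0)"

definition slot23 :: "nat \<Rightarrow> (nat \<Rightarrow> nat \<Rightarrow> nat \<Rightarrow> K) \<Rightarrow> nat \<Rightarrow> nat \<Rightarrow> nat \<Rightarrow> K" where
  "slot23 m F u v w = diag_coef m v w * F u v w + (if v \<noteq> w then swap_coef m v w * F u w v else 0)"

lemma yang_baxter: "slot12 m (slot23 m (slot12 m F)) a b c = slot23 m (slot12 m (slot23 m F)) a b c"
  using qq_nonzero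
  by (cases a b rule: linorder_cases; cases b c rule: linorder_cases; cases a c rule: linorder_cases;
      cases "odd_v m a"; cases "odd_v m b"; cases "odd_v m c")
    (simp_all add: slot12_def slot23_def diag_coef_def swap_coef_def psgn_def cc_def field_simps)

definition put3 :: "nat list \<Rightarrow> nat \<Rightarrow> nat \<Rightarrow> nat \<Rightarrow> nat \<Rightarrow> nat list" where
  "put3 x p u v w = x[p := u, Suc p := v, Suc (Suc p) := w]"

lemma length_put3 [simp]: "length (put3 x p u v w) = length x"
  by (simp add: put3_def)

lemma nth_put3: "Suc (Suc p) < length x \<Longrightarrow> j < length x \<Longrightarrow> put3 x p u v w ! j =
    (if j = p then u else if j = Suc p then v else if j = Suc (Suc p) then w else x ! j)"
  by (auto simp: put3_def nth_list_update)

lemma put3_self: "Suc (Suc p) < length x \<Longrightarrow> put3 x p (x ! p) (x ! Suc p) (x ! Suc (Suc p)) = x"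
  by (rule nth_equalityI) (auto simp: nth_put3)

lemma swap_pos_put3:
  "Suc (Suc p) < length x \<Longrightarrow> swap_pos (Suc p) (put3 x p u v w) = put3 x p v u w"
  "Suc (Suc p) < length x \<Longrightarrow> swap_pos (Suc (Suc p)) (put3 x p u v w) = put3 x p u w v"
  by (auto intro!: nth_equalityI simp: nth_put3 nth_swap_pos)

lemma put3_in_tidx_iff:
  assumes "x \<in> tidx m r" "Suc (Suc p) < r"
  shows "put3 x p u v w \<in> tidx m r \<longleftrightarrow> u \<in> {1..2*m} \<and> v \<in> {1..2*m} \<and> w \<in> {1..2*m}"
proof -
  have l: "length x = r" using assms by (simp add: tidx_iff)
  show ?thesis
  proof
    assume "put3 x p u v w \<in> tidx m r"
    then have "\<forall>j<r. 1 \<le> put3 x p u v w ! j \<and> put3 x p u v w ! j \<le> 2 * m"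
      by (simp add: tidx_iff)
    then show "u \<in> {1..2*m} \<and> v \<in> {1..2*m} \<and> w \<in> {1..2*m}"
      using assms l
      by (auto simp: nth_put3 dest: spec[of _ p] spec[of _ "Suc p"] spec[of _ "Suc (Suc p)"])
  next
    assume "u \<in> {1..2*m} \<and> v \<in> {1..2*m} \<and> w \<in> {1..2*m}"
    then show "put3 x p u v w \<in> tidx m r" using assms l by (auto simp: tidx_iff nth_put3)
  qed
qed

definition local3 :: "nat list \<Rightarrow> nat \<Rightarrow> nat list \<Rightarrow> nat list lmap \<Rightarrow> nat \<Rightarrow> nat \<Rightarrow> nat \<Rightarrow> K" where
  "local3 x p y g = (\<lambda>u v w. g (put3 x p u v w) y)"

lemma local3_piT:
  assumes x: "x \<in> tidx m r" and p: "Suc (Suc p) < r" and g: "g \<in> lin (tidx m r)"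
  shows "local3 x p y (mmul (tidx m r) (piT m r (Suc p)) g) = slot12 m (local3 x p y g)"
    and "local3 x p y (mmul (tidx m r) (piT m r (Suc (Suc p))) g) = slot23 m (local3 x p y g)"
proof -
  have l: "length x = r" using x by (simp add: tidx_iff)
  have out: "put3 x p v u w \<notin> tidx m r" "put3 x p u w v \<notin> tidx m r"
    if "put3 x p u v w \<notin> tidx m r" for u v w
    using that put3_in_tidx_iff[OF x p] by auto
  show "local3 x p y (mmul (tidx m r) (piT m r (Suc p)) g) = slot12 m (local3 x p y g)"
  proof (intro ext)
    fix u v w
    show "local3 x p y (mmul (tidx m r) (piT m r (Suc p)) g) u v w = slot12 m (local3 x p y g) u v w"
      using p l g out[of u v w] unfolding local3_def slot12_def
      by (cases "put3 x p u v w \<in> tidx m r") (auto simp: mmul_piT_apply nth_put3 swap_pos_put3 linD1)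
  qed
  show "local3 x p y (mmul (tidx m r) (piT m r (Suc (Suc p))) g) = slot23 m (local3 x p y g)"
  proof (intro ext)
    fix u v w
    show "local3 x p y (mmul (tidx m r) (piT m r (Suc (Suc p))) g) u v w = slot23 m (local3 x p y g) u v w"
      using p l g out[of u v w] unfolding local3_def slot23_def
      by (cases "put3 x p u v w \<in> tidx m r") (auto simp: mmul_piT_apply nth_put3 swap_pos_put3 linD1)
  qed
qed

lemma piT_braid:
  assumes i: "1 \<le> i" "i + 1 < r"
  shows "mmul (tidx m r) (piT m r i) (mmul (tidx m r) (piT m r (i + 1)) (piT m r i))
       = mmul (tidx m r) (piT m r (i + 1)) (mmul (tidx m r) (piT m r i) (piT m r (i + 1)))"
proof -
  let ?I = "tidx m r" and ?T = "piT m r"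
  obtain p where pi: "i = Suc p" using i by (metis Suc_le_D One_nat_def)
  have p: "Suc (Suc p) < r" using i pi by simp
  have "mmul ?I (?T i) (mmul ?I (?T (i + 1)) (mmul ?I (?T i) f)) x y
      = mmul ?I (?T (i + 1)) (mmul ?I (?T i) (mmul ?I (?T (i + 1)) f)) x y"
    if f: "f \<in> lin ?I" for f x y
  proof (cases "x \<in> ?I")
    case x: True
    have at_x: "G x y = local3 x p y G (x ! p) (x ! Suc p) (x ! Suc (Suc p))" for G
      unfolding local3_def using put3_self[of p x] p x by (simp add: tidx_iff)
    have "local3 x p y (mmul ?I (?T i) (mmul ?I (?T (i + 1)) (mmul ?I (?T i) f)))
        = slot12 m (slot23 m (slot12 m (local3 x p y f)))"
      "local3 x p y (mmul ?I (?T (i + 1)) (mmul ?I (?T i) (mmul ?I (?T (i + 1)) f)))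
        = slot23 m (slot12 m (slot23 m (local3 x p y f)))"
      unfolding pi using f p x by (simp_all add: local3_piT piT_lin)
    then show ?thesis
      by (subst (1 2) at_x) (simp only: yang_baxter)
  qed (simp add: mmul_def piT_def piTp_def mid_def)
  from this[OF lin_mid] show ?thesis
    using piT_lin finite_tidx by (simp add: fun_eq_iff)
qed

lemma hecke_rep_piT: "hecke_rep (tidx m r) r (piT m r)"
proof
  show "mmul (tidx m r) (piT m r i) (mmul (tidx m r) (piT m r (i + 1)) (piT m r i)) =
        mmul (tidx m r) (piT m r (i + 1)) (mmul (tidx m r) (piT m r i) (piT m r (i + 1)))"
    if "1 \<le> i" "i + 1 < r" for i
    using piT_braid[OF that] .
  show "mmul (tidx m r) (piT m r i) (piT m r j) = mmul (tidx m r) (piT m r j) (piT m r i)"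
    if "1 \<le> i" "i + 1 < j" "j < r" for i j
    using piT_far_comm[OF that] .
qed (simp_all add: finite_tidx piT_lin piT_quadratic)

definition parity :: "nat \<Rightarrow> nat \<Rightarrow> nat" where
  "parity m k = (if odd_v m k then 1 else 0)"

definition phi_exp :: "nat \<Rightarrow> nat \<Rightarrow> nat list \<Rightarrow> nat" where
  "phi_exp m r y = (\<Sum>i\<in>{1..<r}. \<Sum>j<i. parity m (y ! j))"

abbreviation sig :: "nat \<Rightarrow> K" where
  "sig r \<equiv> (-1) ^ (r * (r - 1) div 2)"

lemma phiT_eq:
  "phiT m r x y = (if y \<in> tidx m r \<and> x = map (phiv m) y then (-1) ^ phi_exp m r y else 0)"
  by (simp add: phiT_def phi_exp_def parity_def)

lemma phiv_phiv: "k \<in> {1..2*m} \<Longrightarrow> phiv m (phiv m k) = k"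
  and odd_v_phiv: "k \<in> {1..2*m} \<Longrightarrow> odd_v m (phiv m k) \<longleftrightarrow> \<not> odd_v m k"
  and phiv_less_iff: "k \<in> {1..2*m} \<Longrightarrow> l \<in> {1..2*m} \<Longrightarrow> phiv m k < phiv m l \<longleftrightarrow> l < k"
  and phiv_eq_iff: "k \<in> {1..2*m} \<Longrightarrow> l \<in> {1..2*m} \<Longrightarrow> phiv m k = phiv m l \<longleftrightarrow> k = l"
  by (auto simp: phiv_def odd_v_def)

lemma map_phiv_tidx: "x \<in> tidx m r \<Longrightarrow> map (phiv m) x \<in> tidx m r"
  unfolding tidx_iff by (auto simp: phiv_def)

lemma map_phiv_map_phiv: "x \<in> tidx m r \<Longrightarrow> map (phiv m) (map (phiv m) x) = x"
  by (auto simp: tidx_def phiv_phiv intro!: map_idI)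

lemma map_phiv_swap_pos:
  "i < length x \<Longrightarrow> map (phiv m) (swap_pos i x) = swap_pos i (map (phiv m) x)"
  by (auto simp: swap_pos_def map_update)

lemma phiT_lin: "phiT m r \<in> lin (tidx m r)"
  by (auto simp: lin_def phiT_eq map_phiv_tidx)

lemma mmul_phiT_apply:
  "mmul (tidx m r) (phiT m r) f x y = (if x \<in> tidx m r
     then (-1) ^ phi_exp m r (map (phiv m) x) * f (map (phiv m) x) y else 0)"
proof (cases "x \<in> tidx m r")
  case True
  have "phiT m r x z = (if z = map (phiv m) x then (-1) ^ phi_exp m r (map (phiv m) x) else 0)" for z
    using True map_phiv_tidx map_phiv_map_phiv by (auto simp: phiT_eq)
  then show ?thesis
    using True map_phiv_tidx[OF True] finite_tidx
    by (simp add: mmul_def if_distrib[where f="\<lambda>u. u * _"] cong: if_cong)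
next
  case False
  then have "phiT m r x z = 0" for z
    using map_phiv_tidx by (auto simp: phiT_eq)
  then show ?thesis using False by (simp add: mmul_def)
qed

lemma sum_parity_swap_pos:
  assumes "1 \<le> i" "i < k" "k \<le> length z"
  shows "(\<Sum>j<k. parity m (swap_pos i z ! j)) = (\<Sum>j<k. parity m (z ! j))"
proof -
  have p: "transpose (i - 1) i permutes {..<k}" using assms by (intro permutes_swap_id) auto
  have "(\<Sum>j<k. parity m (z ! j)) = (\<Sum>j<k. parity m (z ! transpose (i - 1) i j))"
    using sum.permute[OF p, of "\<lambda>j. parity m (z ! j)"] by (simp add: o_def)
  also have "\<dots> = (\<Sum>j<k. parity m (swap_pos i z ! j))"
    using assms by (intro sum.cong refl) (auto simp: nth_swap_pos transpose_def)
  finally show ?thesis by simp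
qed

lemma phi_exp_swap_pos:
  assumes z: "length z = r" and i: "1 \<le> i" "i < r"
  shows "phi_exp m r (swap_pos i z) + parity m (z ! (i - 1)) = phi_exp m r z + parity m (z ! i)"
proof -
  have ir: "i \<in> {1..<r}" using i by simp
  have rest: "(\<Sum>k\<in>{1..<r} - {i}. \<Sum>j<k. parity m (swap_pos i z ! j))
      = (\<Sum>k\<in>{1..<r} - {i}. \<Sum>j<k. parity m (z ! j))"
  proof (rule sum.cong[OF refl])
    fix k assume k: "k \<in> {1..<r} - {i}"
    show "(\<Sum>j<k. parity m (swap_pos i z ! j)) = (\<Sum>j<k. parity m (z ! j))"
    proof (cases "k < i")
      case True
      then show ?thesis using i z k by (intro sum.cong refl) (auto simp: nth_swap_pos)
    next
      case False
      then show ?thesis using i z k by (intro sum_parity_swap_pos) auto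
    qed
  qed
  obtain p where p: "i = Suc p" using i by (metis Suc_le_D One_nat_def)
  have "(\<Sum>j<p. parity m (swap_pos i z ! j)) = (\<Sum>j<p. parity m (z ! j))"
    using i z p by (intro sum.cong refl) (auto simp: nth_swap_pos)
  moreover have "swap_pos i z ! p = z ! i" using i z p by (simp add: nth_swap_pos)
  ultimately have at_i: "(\<Sum>j<i. parity m (swap_pos i z ! j)) + parity m (z ! (i - 1))
      = (\<Sum>j<i. parity m (z ! j)) + parity m (z ! i)"
    using p by simp
  show ?thesis
    unfolding phi_exp_def
    using sum.remove[OF finite_atLeastLessThan ir, of "\<lambda>k. \<Sum>j<k. parity m (swap_pos i z ! j)"]
      sum.remove[OF finite_atLeastLessThan ir, of "\<lambda>k. \<Sum>j<k. parity m (z ! j)"] rest at_i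
    by simp
qed

lemma sign_swap_pos:
  assumes "length z = r" "1 \<le> i" "i < r"
  shows "(-1::K) ^ phi_exp m r (swap_pos i z)
    = (-1) ^ phi_exp m r z * (-1) ^ parity m (z ! (i - 1)) * (-1) ^ parity m (z ! i)"
proof -
  have "(-1::K) ^ phi_exp m r (swap_pos i z)
      = (-1) ^ phi_exp m r (swap_pos i z) * ((-1) ^ parity m (z ! (i - 1)) * (-1) ^ parity m (z ! (i - 1)))"
    by (simp add: power_add[symmetric] power_mult_distrib[symmetric])
  also have "\<dots> = (-1) ^ (phi_exp m r (swap_pos i z) + parity m (z ! (i - 1))) * (-1) ^ parity m (z ! (i - 1))"
    by (simp add: power_add)
  also have "\<dots> = (-1) ^ (phi_exp m r z + parity m (z ! i)) * (-1) ^ parity m (z ! (i - 1))"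
    by (simp only: phi_exp_swap_pos[OF assms])
  finally show ?thesis by (simp add: power_add)
qed

lemma phi_exp_map_phiv:
  assumes x: "x \<in> tidx m r"
  shows "phi_exp m r x + phi_exp m r (map (phiv m) x) = r * (r - 1) div 2"
proof -
  have "phi_exp m r x + phi_exp m r (map (phiv m) x)
      = (\<Sum>k\<in>{1..<r}. \<Sum>j<k. parity m (x ! j) + parity m (map (phiv m) x ! j))"
    unfolding phi_exp_def by (simp add: sum.distrib)
  also have "\<dots> = (\<Sum>k\<in>{1..<r}. \<Sum>j<k. 1)"
  proof (intro sum.cong refl)
    fix k j assume "k \<in> {1..<r}" "j \<in> {..<k}"
    then show "parity m (x ! j) + parity m (map (phiv m) x ! j) = 1"
      using x by (auto simp: tidx_iff odd_v_phiv parity_def)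
  qed
  also have "\<dots> = r * (r - 1) div 2" by (simp add: Sum_Ico_nat)
  finally show ?thesis .
qed

lemma diag_coef_phiv: "a \<in> {1..2*m} \<Longrightarrow> b \<in> {1..2*m} \<Longrightarrow>
    diag_coef m (phiv m a) (phiv m b) = cc - diag_coef m a b"
  by (cases a b rule: linorder_cases)
    (auto simp: diag_coef_def phiv_less_iff phiv_eq_iff odd_v_phiv cc_def)

lemma swap_coef_phiv: "a \<in> {1..2*m} \<Longrightarrow> b \<in> {1..2*m} \<Longrightarrow>
    swap_coef m (phiv m a) (phiv m b)
      = - swap_coef m a b * (-1) ^ parity m (phiv m a) * (-1) ^ parity m (phiv m b)"
  by (cases "odd_v m a"; cases "odd_v m b") (auto simp: swap_coef_def psgn_def parity_def odd_v_phiv)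

lemma phiT_square: "mmul (tidx m r) (phiT m r) (phiT m r) = msc (sig r) (mid (tidx m r))"
proof -
  have "mmul (tidx m r) (phiT m r) (mmul (tidx m r) (phiT m r) (mid (tidx m r))) x y
      = msc (sig r) (mid (tidx m r)) x y" for x y
  proof (cases "x \<in> tidx m r")
    case True
    have "(-1::K) ^ phi_exp m r (map (phiv m) x) * (-1) ^ phi_exp m r x = sig r"
      using phi_exp_map_phiv[OF True] by (simp add: power_add[symmetric] add.commute)
    then show ?thesis
      using True map_phiv_tidx[OF True] map_phiv_map_phiv[OF True]
      by (simp add: mmul_phiT_apply msc_def mult.assoc[symmetric])
  qed (simp add: mmul_phiT_apply msc_def mid_def)
  then show ?thesis
    using phiT_lin finite_tidx by (simp add: fun_eq_iff)
qed

lemma mmul_phiT_piT_apply: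
  assumes i: "1 \<le> i" "i < r" and f: "f \<in> lin (tidx m r)" and x: "x \<in> tidx m r"
  shows "mmul (tidx m r) (phiT m r) (mmul (tidx m r) (piT m r i) f) x y
    = cc * mmul (tidx m r) (phiT m r) f x y
      - mmul (tidx m r) (piT m r i) (mmul (tidx m r) (phiT m r) f) x y"
proof -
  let ?I = "tidx m r" and ?\<phi> = "phiT m r"
  define z where "z = map (phiv m) x"
  have l: "length x = r" and z: "z \<in> ?I" and lz: "length z = r"
    using x map_phiv_tidx[OF x] by (simp_all add: tidx_iff z_def)
  define a b where "a = x ! (i - 1)" and "b = x ! i"
  have ab: "a \<in> {1..2*m}" "b \<in> {1..2*m}" using x i by (auto simp: tidx_iff a_def b_def)
  have za: "z ! (i - 1) = phiv m a" "z ! i = phiv m b"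
    using i l by (simp_all add: z_def a_def b_def)
  have sx: "swap_pos i x \<in> ?I" using x swap_pos_in_tidx_iff[OF i] by simp
  have bs: "map (phiv m) (swap_pos i x) = swap_pos i z"
    using i l by (simp add: z_def map_phiv_swap_pos)
  have ne: "phiv m a \<noteq> phiv m b \<longleftrightarrow> a \<noteq> b" using ab phiv_eq_iff by blast
  have sg: "(-1::K) ^ phi_exp m r (swap_pos i z)
      = (-1) ^ phi_exp m r z * (-1) ^ parity m (phiv m a) * (-1) ^ parity m (phiv m b)"
    using sign_swap_pos[OF lz i] za by simp
  have L: "mmul ?I ?\<phi> (mmul ?I (piT m r i) f) x y = (-1) ^ phi_exp m r z * (diag_coef m (phiv m a) (phiv m b) * f z y
      + (if a \<noteq> b then swap_coef m (phiv m a) (phiv m b) * f (swap_pos i z) y else 0))"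
    using x z unfolding mmul_phiT_apply mmul_piT_apply[OF i f] z_def[symmetric] za ne by simp
  have R: "mmul ?I (piT m r i) (mmul ?I ?\<phi> f) x y
      = diag_coef m a b * ((-1) ^ phi_exp m r z * f z y)
        + (if a \<noteq> b then swap_coef m a b * ((-1) ^ phi_exp m r (swap_pos i z) * f (swap_pos i z) y) else 0)"
    using x sx unfolding mmul_piT_apply[OF i lin_mmul[OF phiT_lin f]] mmul_phiT_apply bs
    by (simp add: a_def b_def z_def)
  have P: "mmul ?I ?\<phi> f x y = (-1) ^ phi_exp m r z * f z y"
    using x by (simp add: mmul_phiT_apply z_def)
  show ?thesis
    unfolding L R P diag_coef_phiv[OF ab] swap_coef_phiv[OF ab] sg by (simp add: algebra_simps)
qed

lemma phiT_piT:
  assumes i: "1 \<le> i" "i < r"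
  shows "mmul (tidx m r) (phiT m r) (piT m r i)
    = msc cc (phiT m r) - mmul (tidx m r) (piT m r i) (phiT m r)"
proof -
  have "mmul (tidx m r) (phiT m r) (mmul (tidx m r) (piT m r i) (mid (tidx m r))) x y
      = (msc cc (mmul (tidx m r) (phiT m r) (mid (tidx m r)))
         - mmul (tidx m r) (piT m r i) (mmul (tidx m r) (phiT m r) (mid (tidx m r)))) x y" for x y
  proof (cases "x \<in> tidx m r")
    case True
    then show ?thesis using mmul_phiT_piT_apply[OF i lin_mid True] by (simp add: msc_def)
  qed (simp add: msc_def mmul_phiT_apply mmul_piT_apply[OF i lin_mmul[OF phiT_lin lin_mid]])
  then show ?thesis
    using phiT_lin piT_lin finite_tidx by (simp add: fun_eq_iff)
qed

section \<open>The centralizers B_q and D_q\<close>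

(* the paper's T'_i, as an expression in the generators T_i *)
definition tprime_poly :: "nat \<Rightarrow> ncpoly" where
  "tprime_poly i =
    Plus (Times (Scal (2 / (qq + inverse qq))) (Gen i)) (Scal (- cc / (qq + inverse qq)))"

definition goldman_fixed :: "nat \<Rightarrow> ncpoly \<Rightarrow> bool" where
  "goldman_fixed r p \<longleftrightarrow>
    ncwf r p \<and> nceval (Wr r) (regL r) (goldman p) = nceval (Wr r) (regL r) p"

lemma ncwf_tprime_poly: "1 \<le> i \<Longrightarrow> i < r \<Longrightarrow> ncwf r (tprime_poly i)"
  by (simp add: tprime_poly_def)

lemma nceval_tprime_poly:
  "finite J \<Longrightarrow> rho i \<in> lin J \<Longrightarrow> nceval J rho (tprime_poly i)
    = msc (2 / (qq + inverse qq)) (rho i) + msc (- cc / (qq + inverse qq)) (mid J)"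
  by (simp add: tprime_poly_def mmul_msc_left)

lemma nceval_goldman_tprime_poly:
  assumes "finite J" "rho i \<in> lin J"
  shows "nceval J rho (goldman (tprime_poly i)) = - nceval J rho (tprime_poly i)"
proof -
  have *: "msc (2 / S) (msc C M - R) + msc (- C / S) M = - (msc (2 / S) R + msc (- C / S) M)"
    for S C :: K and M R :: "'i lmap"
    by (simp add: fun_eq_iff msc_def diff_divide_distrib algebra_simps)
  have "nceval J rho (goldman (tprime_poly i))
      = msc (2 / (qq + inverse qq)) (msc cc (mid J) - rho i) + msc (- cc / (qq + inverse qq)) (mid J)"
    using assms by (simp add: tprime_poly_def mmul_msc_left msc_minus_one mmul_uminus_left)
  then show ?thesis
    using assms by (simp only: * nceval_tprime_poly)
qed

lemma regL_lin: "regL r i \<in> lin (Wr r)"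
  by (simp add: lin_def regL_def)

lemma goldman_fixed_tprime_prod:
  "1 \<le> i \<Longrightarrow> i < r \<Longrightarrow> 1 \<le> j \<Longrightarrow> j < r \<Longrightarrow>
    goldman_fixed r (Times (tprime_poly i) (tprime_poly j))"
  by (simp add: goldman_fixed_def ncwf_tprime_poly mmul_uminus_left mmul_uminus_right
      nceval_goldman_tprime_poly[where rho="regL r", OF finite_Wr regL_lin])

lemma goldman_fixed_conj:
  "goldman_fixed r p \<Longrightarrow> 1 \<le> j \<Longrightarrow> j < r \<Longrightarrow>
    goldman_fixed r (Times (Times (tprime_poly j) p) (tprime_poly j))"
  by (simp add: goldman_fixed_def ncwf_tprime_poly mmul_uminus_left mmul_uminus_right
      nceval_goldman_tprime_poly[where rho="regL r", OF finite_Wr regL_lin])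

locale q_tensor =
  fixes m r :: nat
  assumes two_le_r: "2 \<le> r"
begin

abbreviation "I \<equiv> tidx m r"
abbreviation "\<phi> \<equiv> phiT m r"
abbreviation "\<theta> \<equiv> piTp m r (Suc 0)"

lemma mmul_assoc_I: "mmul I (mmul I a b) c = mmul I a (mmul I b c)"
  by (rule mmul_assoc[OF finite_tidx])

lemma piTp_eq_nceval: "piTp m r i = nceval I (piT m r) (tprime_poly i)"
proof (intro ext)
  fix x y
  have *: "P = 2 / S * ((S * P + C * M) / 2) + - C / S * M" if "S \<noteq> 0" for S C P M :: K
    using that by (simp add: field_simps)
  show "piTp m r i x y = nceval I (piT m r) (tprime_poly i) x y"
    unfolding nceval_tprime_poly[where rho="piT m r", OF finite_tidx piT_lin] plus_fun_apply
      msc_def piT_def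
    by (rule *[OF qq_plus_inverse_nonzero])
qed

lemma piT_eq_piTp: "piT m r i = msc ((qq + inverse qq) / 2) (piTp m r i) + msc (cc / 2) (mid I)"
  by (simp add: fun_eq_iff piT_def msc_def add_divide_distrib)

lemma piTp_lin [simp]: "piTp m r i \<in> lin I"
  by (simp add: lin_def piTp_def)

lemma piTp_square:
  assumes i: "1 \<le> i" "i < r"
  shows "mmul I (piTp m r i) (piTp m r i) = mid I"
proof -
  define a b where "a = 2 / (qq + inverse qq)" and "b = - cc / (qq + inverse qq)"
  have "(qq + inverse qq) * (qq + inverse qq) = cc * cc + 4"
    using qq_nonzero by (simp add: cc_def field_simps)
  moreover have "2 / S * (2 / S) * C + 2 * (2 / S) * (- C / S) = 0"
    and "S * S = C * C + 4 \<Longrightarrow> 2 / S * (2 / S) + - C / S * (- C / S) = 1"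
    if S: "S \<noteq> 0" for S C :: K
  proof -
    show "2 / S * (2 / S) * C + 2 * (2 / S) * (- C / S) = 0"
      by (simp add: field_simps)
    have eq: "2 / S * (2 / S) + - C / S * (- C / S) = (C * C + 4) / (S * S)"
      by (simp add: field_simps add_divide_distrib)
    show "2 / S * (2 / S) + - C / S * (- C / S) = 1" if h: "S * S = C * C + 4"
      using eq S by (simp add: h[symmetric])
  qed
  ultimately have ab: "a * a * cc + 2 * a * b = 0" "a * a + b * b = 1"
    using qq_plus_inverse_nonzero unfolding a_def b_def by blast+
  have "mmul I (piTp m r i) (piTp m r i)
      = msc (a * a * cc + 2 * a * b) (piT m r i) + msc (a * a + b * b) (mid I)"
    unfolding piTp_eq_nceval nceval_tprime_poly[where rho="piT m r", OF finite_tidx piT_lin]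
      a_def[symmetric] b_def[symmetric] mmul_linear_simps piT_quadratic[OF i]
      mmul_mid_left[OF finite_tidx piT_lin] mmul_mid_right[OF finite_tidx piT_lin]
      mmul_mid_left[OF finite_tidx lin_mid]
    by (simp add: fun_eq_iff msc_def algebra_simps)
  then show ?thesis by (simp add: ab)
qed

lemma phiT_piTp:
  assumes i: "1 \<le> i" "i < r"
  shows "mmul I \<phi> (piTp m r i) = - mmul I (piTp m r i) \<phi>"
proof (intro ext)
  fix x y
  have *: "2 / S * (C * F - G) + - C / S * F = - (2 / S * G + - C / S * F)" for S C F G :: K
    by (simp add: algebra_simps diff_divide_distrib)
  show "mmul I \<phi> (piTp m r i) x y = (- mmul I (piTp m r i) \<phi>) x y"
    unfolding piTp_eq_nceval nceval_tprime_poly[where rho="piT m r", OF finite_tidx piT_lin]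
      mmul_linear_simps phiT_piT[OF i] mmul_mid_left[OF finite_tidx phiT_lin]
      mmul_mid_right[OF finite_tidx phiT_lin]
    unfolding msc_def plus_fun_apply minus_apply uminus_apply
    by (rule *)
qed


lemma Cq_lin: "X \<in> Cq m r \<Longrightarrow> X \<in> lin I"
  by (auto simp: Cq_def hecke_rep.nceval_lin[OF hecke_rep_piT])

lemma nceval_in_Cq: "goldman_fixed r p \<Longrightarrow> nceval I (piT m r) p \<in> Cq m r"
  by (auto simp: Cq_def goldman_fixed_def)

lemma piTp_mult_theta_in_Cq:
  assumes "1 \<le> i" "i < r"
  shows "mmul I (piTp m r i) \<theta> \<in> Cq m r"
proof -
  have "goldman_fixed r (Times (tprime_poly i) (tprime_poly (Suc 0)))"
    using assms two_le_r by (intro goldman_fixed_tprime_prod) auto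
  from nceval_in_Cq[OF this] show ?thesis by (simp add: piTp_eq_nceval)
qed

lemma theta_conj_in_Cq:
  assumes "X \<in> Cq m r"
  shows "mmul I \<theta> (mmul I X \<theta>) \<in> Cq m r"
proof -
  obtain p where p: "goldman_fixed r p" and X: "X = nceval I (piT m r) p"
    using assms by (auto simp: Cq_def goldman_fixed_def)
  have "goldman_fixed r (Times (Times (tprime_poly (Suc 0)) p) (tprime_poly (Suc 0)))"
    using goldman_fixed_conj p two_le_r by simp
  from nceval_in_Cq[OF this] show ?thesis by (simp add: X piTp_eq_nceval mmul_assoc_I)
qed

lemma phiT_comm_Cq: "X \<in> Cq m r \<Longrightarrow> mmul I \<phi> X = mmul I X \<phi>"
proof -
  assume "X \<in> Cq m r"
  then obtain p where p: "goldman_fixed r p" and X: "X = nceval I (piT m r) p"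
    by (auto simp: Cq_def goldman_fixed_def)
  have wf: "ncwf r p" "ncwf r (goldman p)"
    using p by (simp_all add: goldman_fixed_def ncwf_goldman)
  have "nceval I (piT m r) (goldman p) = X"
    using hecke_rep.nceval_eq_if_regular_eq[OF hecke_rep_piT wf] p X by (simp add: goldman_fixed_def)
  moreover have "mmul I \<phi> X = mmul I (nceval I (piT m r) (goldman p)) \<phi>"
    unfolding X nceval_goldman[OF finite_tidx piT_lin wf(1)]
    by (rule nceval_intertwine[OF finite_tidx phiT_lin _ wf(1)])
      (simp add: phiT_piT mmul_diff_left mmul_msc_left finite_tidx phiT_lin)
  ultimately show ?thesis by simp
qed

lemma Bq_iff: "X \<in> Bq m r \<longleftrightarrow>
    X \<in> lin I \<and> (\<forall>i. 1 \<le> i \<and> i < r \<longrightarrow> mmul I X (piTp m r i) = mmul I (piTp m r i) X)"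
proof
  assume "X \<in> Bq m r"
  then have X: "X \<in> lin I"
    and comm: "\<And>p. ncwf r p \<Longrightarrow> mmul I X (nceval I (piT m r) p) = mmul I (nceval I (piT m r) p) X"
    by (auto simp: Bq_def centralizer_def Aq_def)
  then show "X \<in> lin I \<and> (\<forall>i. 1 \<le> i \<and> i < r \<longrightarrow> mmul I X (piTp m r i) = mmul I (piTp m r i) X)"
    using comm[OF ncwf_tprime_poly] by (simp add: piTp_eq_nceval)
next
  assume X: "X \<in> lin I \<and> (\<forall>i. 1 \<le> i \<and> i < r \<longrightarrow> mmul I X (piTp m r i) = mmul I (piTp m r i) X)"
  then have comm: "mmul I X (piT m r i) = mmul I (piT m r i) X" if "1 \<le> i" "i < r" for i
    using that finite_tidx by (simp add: piT_eq_piTp mmul_linear_simps)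
  have "mmul I X (nceval I (piT m r) p) = mmul I (nceval I (piT m r) p) X" if "ncwf r p" for p
    by (rule nceval_intertwine[OF finite_tidx _ _ that]) (use X comm in auto)
  then show "X \<in> Bq m r"
    using X by (auto simp: Bq_def centralizer_def Aq_def)
qed

lemma Bq_subset_Dq: "Bq m r \<subseteq> Dq m r"
  by (auto simp: Bq_def Dq_def centralizer_def Aq_def Cq_def)

lemma subspace_Bq: "module.subspace msc (Bq m r)"
proof -
  interpret vector_space "msc :: K \<Rightarrow> nat list lmap \<Rightarrow> nat list lmap"
    by (rule vector_space_msc)
  show ?thesis unfolding subspace_def by (auto simp: Bq_iff mmul_linear_simps)
qed

lemma Bq_mult_phiT_in_Dq:
  assumes b: "b \<in> Bq m r"
  shows "mmul I b \<phi> \<in> Dq m r"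
  unfolding Dq_def centralizer_def
proof (intro CollectI conjI ballI)
  show "mmul I b \<phi> \<in> lin I" using b by (simp add: Bq_iff phiT_lin)
  fix X assume X: "X \<in> Cq m r"
  have "mmul I b X = mmul I X b"
    using b X Bq_subset_Dq by (auto simp: Dq_def centralizer_def)
  then show "mmul I (mmul I b \<phi>) X = mmul I X (mmul I b \<phi>)"
    using phiT_comm_Cq[OF X] by (simp add: mmul_assoc_I) (simp add: mmul_assoc_I[symmetric])
qed


lemma Dq_lin: "d \<in> Dq m r \<Longrightarrow> d \<in> lin I"
  and Dq_comm: "d \<in> Dq m r \<Longrightarrow> X \<in> Cq m r \<Longrightarrow> mmul I d X = mmul I X d"
  by (auto simp: Dq_def centralizer_def)

lemma theta_square: "mmul I \<theta> \<theta> = mid I"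
  using piTp_square[of "Suc 0"] two_le_r by simp

lemma phiT_theta: "mmul I \<phi> \<theta> = - mmul I \<theta> \<phi>"
  using phiT_piTp[of "Suc 0"] two_le_r by simp

lemma theta_cancel: "X \<in> lin I \<Longrightarrow> mmul I \<theta> (mmul I \<theta> X) = X"
  by (simp only: mmul_assoc_I[symmetric] theta_square) (simp add: finite_tidx)

lemma Dq_theta_conj:
  assumes d: "d \<in> Dq m r"
  shows "mmul I \<theta> (mmul I d \<theta>) \<in> Dq m r"
  unfolding Dq_def centralizer_def
proof (intro CollectI conjI ballI)
  show "mmul I \<theta> (mmul I d \<theta>) \<in> lin I" using Dq_lin[OF d] by simp
  fix X assume X: "X \<in> Cq m r"
  have Xl: "X \<in> lin I" by (rule Cq_lin[OF X])
  have "mmul I d (mmul I \<theta> (mmul I X \<theta>)) = mmul I (mmul I \<theta> (mmul I X \<theta>)) d"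
    using Dq_comm[OF d theta_conj_in_Cq[OF X]] .
  have "mmul I (mmul I \<theta> (mmul I d \<theta>)) X
      = mmul I \<theta> (mmul I (mmul I d (mmul I \<theta> (mmul I X \<theta>))) \<theta>)"
    using Xl Dq_lin[OF d] by (simp only: mmul_assoc_I theta_square) (simp add: finite_tidx)
  also have "\<dots> = mmul I \<theta> (mmul I (mmul I (mmul I \<theta> (mmul I X \<theta>)) d) \<theta>)"
    using Dq_comm[OF d theta_conj_in_Cq[OF X]] by simp
  also have "\<dots> = mmul I X (mmul I \<theta> (mmul I d \<theta>))"
    using Xl Dq_lin[OF d] by (simp add: mmul_assoc_I theta_cancel)
  finally show "mmul I (mmul I \<theta> (mmul I d \<theta>)) X = mmul I X (mmul I \<theta> (mmul I d \<theta>))" .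
qed

lemma mem_Bq_if_comm_theta:
  assumes X: "X \<in> lin I" and X_theta: "mmul I X \<theta> = mmul I \<theta> X"
    and X_y: "\<And>i. 1 \<le> i \<Longrightarrow> i < r \<Longrightarrow>
      mmul I X (mmul I (piTp m r i) \<theta>) = mmul I (mmul I (piTp m r i) \<theta>) X"
  shows "X \<in> Bq m r"
  unfolding Bq_iff
proof (intro conjI allI impI)
  fix i assume i: "1 \<le> i \<and> i < r"
  define y where "y = mmul I (piTp m r i) \<theta>"
  have T': "piTp m r i = mmul I y \<theta>"
    by (simp only: y_def mmul_assoc_I theta_square) (simp add: finite_tidx)
  have "mmul I X (mmul I y \<theta>) = mmul I y (mmul I \<theta> X)"
  proof -
    have "mmul I X (mmul I y \<theta>) = mmul I (mmul I X y) \<theta>"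
      by (simp only: mmul_assoc_I)
    also have "\<dots> = mmul I (mmul I y X) \<theta>"
      using X_y[of i] i by (simp only: y_def)
    also have "\<dots> = mmul I y (mmul I \<theta> X)"
      by (simp only: mmul_assoc_I X_theta)
    finally show ?thesis .
  qed
  then show "mmul I X (piTp m r i) = mmul I (piTp m r i) X"
    by (simp add: T' mmul_assoc_I)
qed (rule X)


lemma sig_square: "sig r * sig r = 1"
  by (simp add: power_add[symmetric] power_mult_distrib[symmetric] mult_2[symmetric] power_mult)

lemma phiT_cancel: "X \<in> lin I \<Longrightarrow> mmul I (mmul I X \<phi>) \<phi> = msc (sig r) X"
  by (simp add: mmul_assoc_I phiT_square mmul_msc_right finite_tidx)

lemma Dq_comm_y: "d \<in> Dq m r \<Longrightarrow> 1 \<le> i \<Longrightarrow> i < r \<Longrightarrow>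
    mmul I d (mmul I (piTp m r i) \<theta>) = mmul I (mmul I (piTp m r i) \<theta>) d"
  by (rule Dq_comm[OF _ piTp_mult_theta_in_Cq])

lemma Dq_add: "a \<in> Dq m r \<Longrightarrow> b \<in> Dq m r \<Longrightarrow> a + b \<in> Dq m r"
  and Dq_diff: "a \<in> Dq m r \<Longrightarrow> b \<in> Dq m r \<Longrightarrow> a - b \<in> Dq m r"
  and Dq_msc: "a \<in> Dq m r \<Longrightarrow> msc c a \<in> Dq m r"
  by (simp_all add: Dq_def centralizer_def mmul_linear_simps)

lemma Dq_mem_Bq_if_comm_theta: "d \<in> Dq m r \<Longrightarrow> mmul I d \<theta> = mmul I \<theta> d \<Longrightarrow> d \<in> Bq m r"
  by (rule mem_Bq_if_comm_theta) (simp_all add: Dq_lin Dq_comm_y)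

lemma Dq_mult_phiT_mem_Bq_if_anticomm_theta:
  assumes e: "e \<in> Dq m r" and anti: "mmul I e \<theta> = - mmul I \<theta> e"
  shows "mmul I e \<phi> \<in> Bq m r"
proof (rule mem_Bq_if_comm_theta)
  show "mmul I e \<phi> \<in> lin I" using Dq_lin[OF e] phiT_lin by simp
  show "mmul I (mmul I e \<phi>) \<theta> = mmul I \<theta> (mmul I e \<phi>)"
    using anti by (simp add: mmul_assoc_I phiT_theta mmul_linear_simps)
      (simp add: mmul_assoc_I[symmetric] mmul_linear_simps)
  show "mmul I (mmul I e \<phi>) (mmul I (piTp m r i) \<theta>) = mmul I (mmul I (piTp m r i) \<theta>) (mmul I e \<phi>)"
    if "1 \<le> i" "i < r" for i
    using phiT_comm_Cq[OF piTp_mult_theta_in_Cq[OF that]] Dq_comm_y[OF e that]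
    by (simp add: mmul_assoc_I) (simp add: mmul_assoc_I[symmetric])
qed

lemma Dq_decompose:
  assumes d: "d \<in> Dq m r"
  obtains b1 b2 where "b1 \<in> Bq m r" "b2 \<in> Bq m r" "d = b1 + mmul I b2 \<phi>"
proof -
  define t where "t = mmul I \<theta> (mmul I d \<theta>)"
  have t: "t \<in> Dq m r" using Dq_theta_conj[OF d] by (simp add: t_def)
  have theta_t: "mmul I \<theta> t = mmul I d \<theta>" "mmul I t \<theta> = mmul I \<theta> d"
    using Dq_lin[OF d] by (simp_all add: t_def theta_cancel mmul_assoc_I theta_square finite_tidx)
  \<comment> \<open>the parts of d commuting and anticommuting with \<theta>\<close>
  define b1 e where "b1 = msc (1/2) (d + t)" and "e = msc (1/2) (d - t)"
  have b1: "b1 \<in> Bq m r"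
    by (rule Dq_mem_Bq_if_comm_theta)
      (simp_all add: b1_def Dq_msc Dq_add d t mmul_linear_simps theta_t add.commute)
  have e: "e \<in> Dq m r"
    unfolding e_def by (intro Dq_msc Dq_diff d t)
  have "mmul I e \<theta> = - mmul I \<theta> e"
    unfolding e_def mmul_msc_left mmul_msc_right mmul_diff_left mmul_diff_right theta_t
    by (simp add: fun_eq_iff msc_def algebra_simps)
  then have b2: "msc (sig r) (mmul I e \<phi>) \<in> Bq m r"
    using Dq_mult_phiT_mem_Bq_if_anticomm_theta[OF e] by (simp add: Bq_iff mmul_linear_simps)
  have "mmul I (msc (sig r) (mmul I e \<phi>)) \<phi> = e"
    using sig_square Dq_lin[OF e] by (simp add: mmul_msc_left phiT_cancel)
  moreover have "d = b1 + e"
    by (simp add: b1_def e_def fun_eq_iff msc_def field_simps)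
  ultimately show thesis
    using that[OF b1 b2] by simp
qed

lemma Bq_phiT_unique:
  assumes b1: "b1 \<in> Bq m r" and b2: "b2 \<in> Bq m r" and z: "b1 + mmul I b2 \<phi> = 0"
  shows "b1 = 0 \<and> b2 = 0"
proof -
  have b1l: "b1 \<in> lin I" and b2l: "b2 \<in> lin I" using b1 b2 by (auto simp: Bq_iff)
  have c1: "mmul I b1 \<theta> = mmul I \<theta> b1" and c2: "mmul I b2 \<theta> = mmul I \<theta> b2"
    using b1 b2 two_le_r by (auto simp: Bq_iff)
  have e: "b1 = - mmul I b2 \<phi>" using z by (simp add: eq_neg_iff_add_eq_0)
  have "mmul I \<theta> b1 = mmul I b1 \<theta>" using c1 by simp
  also have "\<dots> = - mmul I b2 (mmul I \<phi> \<theta>)" by (simp add: e mmul_linear_simps mmul_assoc_I)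
  also have "\<dots> = mmul I \<theta> (mmul I b2 \<phi>)"
    by (simp add: phiT_theta mmul_linear_simps mmul_assoc_I[symmetric] c2)
  also have "\<dots> = - mmul I \<theta> b1" by (simp add: e mmul_linear_simps)
  finally have "mmul I \<theta> b1 = 0" by (simp add: fun_eq_iff)
  then have "mmul I \<theta> (mmul I \<theta> b1) = 0" by simp
  then have b1z: "b1 = 0" using theta_cancel[OF b1l] by simp
  then have "mmul I (mmul I b2 \<phi>) \<phi> = 0" using z by simp
  then have "msc (sig r) (msc (sig r) b2) = 0" by (simp only: phiT_cancel[OF b2l]) simp
  then show ?thesis using b1z sig_square by simp
qed


lemma Dq_eq_sums: "Dq m r = {b1 + mmul I b2 \<phi> | b1 b2. b1 \<in> Bq m r \<and> b2 \<in> Bq m r}"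
  using Dq_decompose Bq_subset_Dq Bq_mult_phiT_in_Dq Dq_add by blast

lemma dim_Dq:
  "vector_space.dim (msc :: K \<Rightarrow> nat list lmap \<Rightarrow> nat list lmap) (Dq m r)
    = 2 * vector_space.dim (msc :: K \<Rightarrow> nat list lmap \<Rightarrow> nat list lmap) (Bq m r)"
proof -
  have lin: "Vector_Spaces.linear msc msc (\<lambda>b. mmul I b \<phi>)"
    by (intro Vector_Spaces.linear_iff[THEN iffD2] conjI allI vector_space_msc mmul_add_left mmul_msc_left)
  have "vector_space.dim msc {a + (\<lambda>b. mmul I b \<phi>) b | a b. a \<in> Bq m r \<and> b \<in> Bq m r}
      = 2 * vector_space.dim (msc :: K \<Rightarrow> nat list lmap \<Rightarrow> nat list lmap) (Bq m r)"
    by (rule vector_space.dim_sums_linear_image[OF vector_space_msc subspace_Bq lin])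
      (simp add: Bq_phiT_unique)
  then show ?thesis by (simp add: Dq_eq_sums)
qed

lemma cp_carrier_Z2:
  "x \<in> cp_carrier Z2 A \<longleftrightarrow> x 1 \<in> A \<and> x (-1) \<in> A \<and> (\<forall>s. s \<noteq> 1 \<and> s \<noteq> -1 \<longrightarrow> x s = 0)"
  by (auto simp: cp_carrier_def Z2_def)

lemma Phi_image: "Phi m r ` cp_carrier Z2 (Bq m r) = Dq m r"
proof
  show "Phi m r ` cp_carrier Z2 (Bq m r) \<subseteq> Dq m r"
    using Bq_subset_Dq Bq_mult_phiT_in_Dq Dq_add by (auto simp: cp_carrier_Z2 Phi_def)
  show "Dq m r \<subseteq> Phi m r ` cp_carrier Z2 (Bq m r)"
  proof
    fix d assume "d \<in> Dq m r"
    then obtain b1 b2 where b: "b1 \<in> Bq m r" "b2 \<in> Bq m r" "d = b1 + mmul I b2 \<phi>"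
      by (rule Dq_decompose)
    define x where "x = (\<lambda>s :: int. if s = 1 then b1 else if s = -1 then b2 else 0)"
    have "x \<in> cp_carrier Z2 (Bq m r)" "Phi m r x = d"
      using b by (auto simp: x_def cp_carrier_Z2 Phi_def)
    then show "d \<in> Phi m r ` cp_carrier Z2 (Bq m r)" by blast
  qed
qed

lemma inj_on_Phi: "inj_on (Phi m r) (cp_carrier Z2 (Bq m r))"
proof (rule inj_onI)
  fix x y
  assume x: "x \<in> cp_carrier Z2 (Bq m r)" and y: "y \<in> cp_carrier Z2 (Bq m r)"
    and eq: "Phi m r x = Phi m r y"
  have "(x 1 - y 1) + mmul I (x (-1) - y (-1)) \<phi> = 0"
    using eq unfolding Phi_def mmul_diff_left by (simp add: algebra_simps)
  then have "x 1 - y 1 = 0 \<and> x (-1) - y (-1) = 0"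
    using x y by (intro Bq_phiT_unique) (auto simp: cp_carrier_Z2 Bq_iff mmul_linear_simps)
  then have "x s = y s" for s
    using x y by (cases "s = 1 \<or> s = -1") (auto simp: cp_carrier_Z2)
  then show "x = y" by (rule ext)
qed

lemma Phi_cp_mul:
  assumes x: "x \<in> cp_carrier Z2 (Bq m r)" and y: "y \<in> cp_carrier Z2 (Bq m r)"
  shows "Phi m r (cp_mul Z2 (*) I (psi1 m r) (alpha1 m r) x y) = mmul I (Phi m r x) (Phi m r y)"
proof -
  have l: "x 1 \<in> lin I" "x (-1) \<in> lin I" "y 1 \<in> lin I" "y (-1) \<in> lin I"
    using x y by (auto simp: cp_carrier_Z2 Bq_iff)
  have phi_phi: "mmul I \<phi> (mmul I \<phi> Z) = msc (sig r) Z" if "Z \<in> lin I" for Z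
    using that finite_tidx by (simp add: mmul_assoc_I[symmetric] phiT_square mmul_msc_left)
  have "cp_mul Z2 (*) I (psi1 m r) (alpha1 m r) x y 1
      = mmul I (mmul I (x 1) (y 1)) (mid I)
        + mmul I (mmul I (x (-1)) (omega m r (y (-1)))) (msc (sig r) (mid I))"
    "cp_mul Z2 (*) I (psi1 m r) (alpha1 m r) x y (-1)
      = mmul I (mmul I (x 1) (y (-1))) (mid I) + mmul I (mmul I (x (-1)) (omega m r (y 1))) (mid I)"
    by (simp_all add: cp_mul_def Z2_def psi1_def alpha1_def)
  then show ?thesis
    unfolding Phi_def omega_def
    using l phiT_lin finite_tidx sig_square
    by (simp add: mmul_linear_simps mmul_assoc_I phi_phi add_ac phiT_square)
qed

end

lemma Phi_add: "Phi m r (x + y) = Phi m r x + Phi m r y"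
  by (simp add: Phi_def mmul_add_left add_ac)

lemma Phi_msc: "Phi m r (\<lambda>s. msc c (x s)) = msc c (Phi m r x)"
  by (simp add: Phi_def mmul_msc_left msc_add)

lemma Phi_unit: "Phi m r (\<lambda>s. if s = 1 then mid (tidx m r) else 0) = mid (tidx m r)"
  by (simp add: Phi_def)

theorem theorem5p6:
  fixes m r :: nat
  assumes "2 \<le> r" and "0 < m"
  shows "bij_betw (Phi m r) (cp_carrier Z2 (Bq m r)) (Dq m r)
    \<and> (\<forall>x\<in>cp_carrier Z2 (Bq m r). \<forall>y\<in>cp_carrier Z2 (Bq m r).
          Phi m r (cp_mul Z2 (*) (tidx m r) (psi1 m r) (alpha1 m r) x y)
            = mmul (tidx m r) (Phi m r x) (Phi m r y))
    \<and> (\<forall>x\<in>cp_carrier Z2 (Bq m r). \<forall>y\<in>cp_carrier Z2 (Bq m r).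
          Phi m r (x + y) = Phi m r x + Phi m r y)
    \<and> (\<forall>c. \<forall>x\<in>cp_carrier Z2 (Bq m r).
          Phi m r (\<lambda>s. msc c (x s)) = msc c (Phi m r x))
    \<and> Phi m r (\<lambda>s. if s = 1 then mid (tidx m r) else 0) = mid (tidx m r)
    \<and> vector_space.dim (msc :: K \<Rightarrow> nat list lmap \<Rightarrow> nat list lmap) (Dq m r)
        = 2 * vector_space.dim (msc :: K \<Rightarrow> nat list lmap \<Rightarrow> nat list lmap) (Bq m r)"
proof -
  interpret q_tensor m r
    using assms(1) by unfold_locales
  have "bij_betw (Phi m r) (cp_carrier Z2 (Bq m r)) (Dq m r)"
    using inj_on_Phi Phi_image by (rule bij_betw_imageI)
  then show ?thesis
    using Phi_cp_mul Phi_add Phi_msc Phi_unit dim_Dq by blast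
qed

end
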